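(* Consider a bipartite system $A|B$ of $N=N_A+N_B$ modes for which the PPT criterion is necessary and sufficient for separability of covariance matrices, i.e. a covariance matrix $\gamma'$ is separable w.r.t. $A|B$ iff its partially transposed matrix $\gamma'^{T_A}$ satisfies $\gamma'^{T_A}+i\sigma\ge0$ (equivalently all symplectic eigenvalues of $\gamma'^{T_A}$ are $\ge1$). Let $\gamma$ be the covariance matrix of a Gaussian $N$-mode state. (1) If for some entanglement witness $Z\in\mathcal{Z}_{A|B}(\mathbb{R}^{2N})$ one has $m:=\mathrm{tr}[Z\gamma]\in(0,1)$, then $E_{\mathcal N}(\gamma)\ge\ln\frac1m$. (2) In the two-mode case ($N_A=N_B=1$), if $Z_{\min}\in\mathcal{Z}_{A|B}(\mathbb{R}^4)$ attains the minimum $m_{\min}=\mathrm{tr}[Z_{\min}\gamma]=\min_{Z\in\mathcal{Z}_{A|B}(\mathbb{R}^4)}\mathrm{tr}[Z\gamma]$ and $m_{\min}\in(0,1)$, then $E_{\mathcal N}(\gamma)=\ln\frac1{m_{\min}}$.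
   Context: $\sigma=\bigoplus\begin{pmatrix}0&1\\-1&0\end{pmatrix}$. Covariance matrices: real symmetric $\gamma$ with $\gamma\ge0$, $\gamma\pm i\sigma\ge0$; $\Gamma(\mathbb{R}^{2M})$ is the set of $2M\times 2M$ ones. $\gamma$ is separable w.r.t. $A|B$ if $\gamma\ge\gamma_A\oplus\gamma_B$ with $\gamma_A\in\Gamma(\mathbb{R}^{2N_A})$, $\gamma_B\in\Gamma(\mathbb{R}^{2N_B})$; this set is $\Gamma_{A|B}(\mathbb{R}^{2N})$. $\mathcal{Z}_{A|B}(\mathbb{R}^{2N})=\{Z\text{ real symmetric}:\ \mathrm{tr}[\gamma Z]\ge1\ \forall\gamma\in\Gamma_{A|B}(\mathbb{R}^{2N})\}$. Partially transposed covariance matrix: $\gamma^{T_A}=(M_A\oplus\mathbb{1}_B)\gamma(M_A\oplus\mathbb{1}_B)$ with $M_A=\bigoplus_{i=1}^{N_A}\mathrm{diag}(1,-1)$. Symplectic eigenvalues of a positive real symmetric $2N\times2N$ matrix $X$ are the positive eigenvalues of $i\sigma X$. Logarithmic negativity of a covariance matrix: $E_{\mathcal N}(\gamma)=-\sum_i\min(\ln\gamma_i^{T_A},0)$, where $\gamma_i^{T_A}$ are the symplectic eigenvalues of $\gamma^{T_A}$ (this equals $\ln\|\rho^{T_A}\|_1$ for the Gaussian state $\rho$). The PPT hypothesis holds e.g. for $N_A=1$. *)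

theory Defs
  imports "Jordan_Normal_Form.Matrix" "Jordan_Normal_Form.Char_Poly"
    "HOL-Computational_Algebra.Polynomial"
begin

text \<open>Mode k occupies coordinates 2k and 2k+1
  (0-based), and in the bipartite system A|B the N_A modes of A come first.\<close>

definition mtrace :: "'a::comm_ring_1 mat \<Rightarrow> 'a" where
  "mtrace A = (\<Sum>i<dim_row A. A $$ (i, i))"

definition real_sym :: "nat \<Rightarrow> real mat \<Rightarrow> bool" where
  "real_sym n X \<longleftrightarrow> X \<in> carrier_mat n n \<and> transpose_mat X = X"

definition real_psd :: "nat \<Rightarrow> real mat \<Rightarrow> bool" where
  "real_psd n X \<longleftrightarrow> X \<in> carrier_mat n n \<and> (\<forall>v \<in> carrier_vec n. 0 \<le> v \<bullet> (X *\<^sub>v v))"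

definition cpx_psd :: "nat \<Rightarrow> complex mat \<Rightarrow> bool" where
  "cpx_psd n X \<longleftrightarrow> X \<in> carrier_mat n n
     \<and> (\<forall>i<n. \<forall>j<n. X $$ (j, i) = cnj (X $$ (i, j)))
     \<and> (\<forall>v \<in> carrier_vec n. Im (map_vec cnj v \<bullet> (X *\<^sub>v v)) = 0
                              \<and> 0 \<le> Re (map_vec cnj v \<bullet> (X *\<^sub>v v)))"

text \<open>The symplectic form sigma = direct sum of [[0,1],[-1,0]] on R^(2n).\<close>
definition sympl :: "nat \<Rightarrow> real mat" where
  "sympl n = mat (2*n) (2*n) (\<lambda>(i, j).
      if even i \<and> j = i + 1 then 1 else if odd i \<and> j + 1 = i then -1 else 0)"

definition cmat :: "real mat \<Rightarrow> complex mat" where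
  "cmat X = map_mat complex_of_real X"

definition plus_i_sigma :: "nat \<Rightarrow> real mat \<Rightarrow> complex mat" where
  "plus_i_sigma n X = cmat X + \<i> \<cdot>\<^sub>m cmat (sympl n)"

definition minus_i_sigma :: "nat \<Rightarrow> real mat \<Rightarrow> complex mat" where
  "minus_i_sigma n X = cmat X - \<i> \<cdot>\<^sub>m cmat (sympl n)"

definition cov_mats :: "nat \<Rightarrow> real mat set" where
  "cov_mats n = {g. real_sym (2*n) g \<and> real_psd (2*n) g
                    \<and> cpx_psd (2*n) (plus_i_sigma n g) \<and> cpx_psd (2*n) (minus_i_sigma n g)}"

definition dsum :: "real mat \<Rightarrow> real mat \<Rightarrow> real mat" where
  "dsum X Y = four_block_mat X (0\<^sub>m (dim_row X) (dim_col Y)) (0\<^sub>m (dim_row Y) (dim_col X)) Y"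

definition sep_cov_mats :: "nat \<Rightarrow> nat \<Rightarrow> real mat set" where
  "sep_cov_mats NA NB = {g. g \<in> cov_mats (NA + NB) \<and>
      (\<exists>gA \<in> cov_mats NA. \<exists>gB \<in> cov_mats NB. real_psd (2*(NA+NB)) (g - dsum gA gB))}"

definition witnesses :: "nat \<Rightarrow> nat \<Rightarrow> real mat set" where
  "witnesses NA NB = {Z. real_sym (2*(NA+NB)) Z \<and>
      (\<forall>g \<in> sep_cov_mats NA NB. 1 \<le> mtrace (g * Z))}"

definition pt_mat :: "nat \<Rightarrow> nat \<Rightarrow> real mat" where
  "pt_mat NA NB = mat (2*(NA+NB)) (2*(NA+NB)) (\<lambda>(i, j).
      if i = j then (if i < 2*NA \<and> odd i then -1 else 1) else 0)"

definition partial_transpose :: "nat \<Rightarrow> nat \<Rightarrow> real mat \<Rightarrow> real mat" where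
  "partial_transpose NA NB g = pt_mat NA NB * g * pt_mat NA NB"

text \<open>Symplectic eigenvalues of X: positive eigenvalues of i sigma X, counted with
  algebraic multiplicity. The log-negativity sums over the distinct positive real
  eigenvalues weighted by their multiplicity as roots of the characteristic polynomial.\<close>
definition i_sigma_mat :: "nat \<Rightarrow> real mat \<Rightarrow> complex mat" where
  "i_sigma_mat n X = \<i> \<cdot>\<^sub>m (cmat (sympl n) * cmat X)"

definition symp_eigs :: "nat \<Rightarrow> real mat \<Rightarrow> real set" where
  "symp_eigs n X = {r. 0 < r \<and> eigenvalue (i_sigma_mat n X) (complex_of_real r)}"

definition symp_mult :: "nat \<Rightarrow> real mat \<Rightarrow> real \<Rightarrow> nat" where
  "symp_mult n X r = order (complex_of_real r) (char_poly (i_sigma_mat n X))"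

definition log_neg :: "nat \<Rightarrow> nat \<Rightarrow> real mat \<Rightarrow> real" where
  "log_neg NA NB g = - (\<Sum>r \<in> symp_eigs (NA+NB) (partial_transpose NA NB g).
      real (symp_mult (NA+NB) (partial_transpose NA NB g) r) * min (ln r) 0)"

end

theory Submission
  imports Defs
begin

text \<open>Let \<open>p = exp (- E\<^sub>N(\<gamma>))\<close>, the product (with multiplicity) of the symplectic eigenvalues
  of \<open>\<gamma>\<^sup>T\<^sup>A\<close> below \<open>1\<close>. No symplectic eigenvalue lies in \<open>(0, p)\<close>, so \<open>\<gamma>\<^sup>T\<^sup>A + t i\<sigma>\<close> is
  nonsingular for \<open>0 \<le> t < p\<close>; starting from the positive definite \<open>\<gamma>\<^sup>T\<^sup>A\<close>, this path stays
  positive semidefinite up to \<open>t = p\<close>. Hence \<open>\<gamma> / p\<close> is a covariance matrix satisfying the PPT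
  condition, so it is separable and every witness has \<open>tr[Z\<gamma>] \<ge> p\<close>, which is (1).

  For two modes the eigenvalues of \<open>i\<sigma>\<gamma>\<^sup>T\<^sup>A\<close> are \<open>\<plusminus>\<nu>\<^sub>1, \<plusminus>\<nu>\<^sub>2\<close> with
  \<open>(\<nu>\<^sub>1 \<nu>\<^sub>2)\<^sup>2 = |det (i\<sigma>\<gamma>)| \<ge> 1\<close>, so at most one \<open>\<nu>\<^sub>j\<close> lies below \<open>1\<close> and then \<open>p = \<nu>\<^sub>j\<close>.
  The real part of the partially transposed dyad of a conjugated eigenvector for \<open>\<nu>\<^sub>j\<close>,
  suitably normalised, is a witness with \<open>tr[Z\<gamma>] = \<nu>\<^sub>j\<close>; so the minimum over witnesses
  is \<open>p\<close>, which is (2).\<close>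

section \<open>Hermitian forms\<close>

definition hform :: "nat \<Rightarrow> complex mat \<Rightarrow> complex vec \<Rightarrow> complex vec \<Rightarrow> complex" where
  "hform m H u v = (\<Sum>i<m. \<Sum>j<m. cnj (u$i) * H$$(i,j) * v$j)"

definition sq_norm :: "nat \<Rightarrow> complex vec \<Rightarrow> real" where
  "sq_norm m v = (\<Sum>i<m. (cmod (v$i))\<^sup>2)"

definition entry_norm :: "nat \<Rightarrow> complex mat \<Rightarrow> real" where
  "entry_norm m K = (\<Sum>i<m. \<Sum>j<m. cmod (K$$(i,j)))"

definition hermitian_mat :: "nat \<Rightarrow> complex mat \<Rightarrow> bool" where
  "hermitian_mat m H \<longleftrightarrow> H \<in> carrier_mat m m \<and> (\<forall>i<m. \<forall>j<m. H $$ (j, i) = cnj (H $$ (i, j)))"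

lemma sum_lessThan_delta: "k < (m::nat) \<Longrightarrow> (\<Sum>j<m. if j = k then f j else 0) = f k"
  by (simp add: sum.delta)

lemma mult_mat_vec_index_sum:
  "A \<in> carrier_mat m m \<Longrightarrow> v \<in> carrier_vec m \<Longrightarrow> i < m \<Longrightarrow> (A *\<^sub>v v) $ i = (\<Sum>j<m. A $$ (i,j) * v $ j)"
  by (simp add: scalar_prod_def lessThan_atLeast0)

lemma times_mat_index_sum:
  "A \<in> carrier_mat m m \<Longrightarrow> B \<in> carrier_mat m m \<Longrightarrow> i < m \<Longrightarrow> j < m \<Longrightarrow>
    (A * B) $$ (i,j) = (\<Sum>k<m. A $$ (i,k) * B $$ (k,j))"
  by (simp add: scalar_prod_def lessThan_atLeast0)

lemma hform_mult_mat_vec: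
  assumes "H \<in> carrier_mat m m" "w \<in> carrier_vec m"
  shows "hform m H u w = (\<Sum>i<m. cnj (u$i) * (H *\<^sub>v w)$i)"
  using assms unfolding hform_def
  by (auto simp: scalar_prod_def row_def sum_distrib_left mult.assoc lessThan_atLeast0 intro!: sum.cong)

lemma hform_add:
  "A \<in> carrier_mat m m \<Longrightarrow> B \<in> carrier_mat m m \<Longrightarrow> hform m (A + B) u v = hform m A u v + hform m B u v"
  unfolding hform_def by (simp add: sum.distrib[symmetric] algebra_simps)

lemma hform_diff:
  "A \<in> carrier_mat m m \<Longrightarrow> B \<in> carrier_mat m m \<Longrightarrow> hform m (A - B) u v = hform m A u v - hform m B u v"
  unfolding hform_def by (simp add: sum_subtractf[symmetric] algebra_simps)

lemma hform_smult: "A \<in> carrier_mat m m \<Longrightarrow> hform m (c \<cdot>\<^sub>m A) u v = c * hform m A u v"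
  unfolding hform_def by (simp add: sum_distrib_left algebra_simps)

lemma hform_expand:
  assumes "u \<in> carrier_vec m" "w \<in> carrier_vec m"
  shows "hform m H (u + of_real s \<cdot>\<^sub>v w) (u + of_real s \<cdot>\<^sub>v w) =
    hform m H u u + of_real s * (hform m H u w + hform m H w u) + of_real (s\<^sup>2) * hform m H w w"
proof -
  have "hform m H (u + of_real s \<cdot>\<^sub>v w) (u + of_real s \<cdot>\<^sub>v w) = (\<Sum>i<m. \<Sum>j<m.
     cnj (u$i) * H$$(i,j) * u$j + of_real s * (cnj (u$i) * H$$(i,j) * w$j + cnj (w$i) * H$$(i,j) * u$j)
     + of_real (s\<^sup>2) * (cnj (w$i) * H$$(i,j) * w$j))"
    unfolding hform_def using assms by (intro sum.cong refl) (simp add: algebra_simps power2_eq_square)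
  also have "\<dots> = hform m H u u + of_real s * (hform m H u w + hform m H w u) + of_real (s\<^sup>2) * hform m H w w"
    unfolding hform_def by (simp add: sum.distrib sum_distrib_left distrib_left)
  finally show ?thesis .
qed

lemma hermitian_matD:
  "hermitian_mat m H \<Longrightarrow> H \<in> carrier_mat m m"
  "hermitian_mat m H \<Longrightarrow> i < m \<Longrightarrow> j < m \<Longrightarrow> H $$ (j, i) = cnj (H $$ (i, j))"
  unfolding hermitian_mat_def by blast+

lemma hermitian_hform_swap:
  assumes "hermitian_mat m H"
  shows "hform m H v u = cnj (hform m H u v)"
proof -
  have "hform m H v u = (\<Sum>j<m. \<Sum>i<m. cnj (v$i) * H$$(i,j) * u$j)"
    unfolding hform_def by (rule sum.swap)
  also have "\<dots> = (\<Sum>j<m. \<Sum>i<m. cnj (cnj (u$j) * H$$(j,i) * v$i))"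
  proof (intro sum.cong refl)
    fix i j assume "i \<in> {..<m}" "j \<in> {..<m}"
    then have "H $$ (j, i) = cnj (H $$ (i, j))" using hermitian_matD(2)[OF assms] by blast
    then show "cnj (v$i) * H$$(i,j) * u$j = cnj (cnj (u$j) * H$$(j,i) * v$i)"
      by (simp add: mult.commute mult.left_commute)
  qed
  also have "\<dots> = cnj (hform m H u v)" by (simp add: hform_def)
  finally show ?thesis .
qed

lemma hermitian_hform_real: "hermitian_mat m H \<Longrightarrow> Im (hform m H v v) = 0"
  using hermitian_hform_swap[of m H v v] by (metis Reals_cnj_iff complex_is_Real_iff)

lemma cpx_psd_iff:
  "cpx_psd m H \<longleftrightarrow> hermitian_mat m H \<and> (\<forall>v\<in>carrier_vec m. 0 \<le> Re (hform m H v v))"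
proof -
  have scalar_prod: "map_vec cnj v \<bullet> (H *\<^sub>v v) = hform m H v v"
    if "H \<in> carrier_mat m m" "v \<in> carrier_vec m" for v
    using that by (simp add: hform_mult_mat_vec scalar_prod_def lessThan_atLeast0)
  show ?thesis
  proof
    assume psd: "cpx_psd m H"
    then have H: "H \<in> carrier_mat m m" and "hermitian_mat m H"
      unfolding cpx_psd_def hermitian_mat_def by blast+
    moreover have "0 \<le> Re (hform m H v v)" if "v \<in> carrier_vec m" for v
      using psd that scalar_prod[OF H that] unfolding cpx_psd_def by metis
    ultimately show "hermitian_mat m H \<and> (\<forall>v\<in>carrier_vec m. 0 \<le> Re (hform m H v v))"
      by blast
  next
    assume H: "hermitian_mat m H \<and> (\<forall>v\<in>carrier_vec m. 0 \<le> Re (hform m H v v))"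
    then have c: "H \<in> carrier_mat m m" by (simp add: hermitian_mat_def)
    have "\<forall>v \<in> carrier_vec m. Im (map_vec cnj v \<bullet> (H *\<^sub>v v)) = 0
                              \<and> 0 \<le> Re (map_vec cnj v \<bullet> (H *\<^sub>v v))"
      using H hermitian_hform_real scalar_prod[OF c] by simp
    then show "cpx_psd m H" unfolding cpx_psd_def using H c unfolding hermitian_mat_def by blast
  qed
qed

lemma hermitian_add:
  assumes "hermitian_mat m A" "hermitian_mat m B" shows "hermitian_mat m (A + B)"
  unfolding hermitian_mat_def
proof (intro conjI allI impI)
  show "A + B \<in> carrier_mat m m" using hermitian_matD(1) assms by auto
  fix i j assume ij: "i < m" "j < m"
  then show "(A + B) $$ (j, i) = cnj ((A + B) $$ (i, j))"
    using hermitian_matD(1)[OF assms(1)] hermitian_matD(1)[OF assms(2)]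
      hermitian_matD(2)[OF assms(1) ij] hermitian_matD(2)[OF assms(2) ij] by simp
qed

lemma hermitian_diff:
  assumes "hermitian_mat m A" "hermitian_mat m B" shows "hermitian_mat m (A - B)"
  unfolding hermitian_mat_def
proof (intro conjI allI impI)
  show "A - B \<in> carrier_mat m m"
    using hermitian_matD(1)[OF assms(1)] hermitian_matD(1)[OF assms(2)] by auto
  fix i j assume ij: "i < m" "j < m"
  then show "(A - B) $$ (j, i) = cnj ((A - B) $$ (i, j))"
    using hermitian_matD(1)[OF assms(1)] hermitian_matD(1)[OF assms(2)]
      hermitian_matD(2)[OF assms(1) ij] hermitian_matD(2)[OF assms(2) ij] by simp
qed

lemma hermitian_smult_real:
  assumes "hermitian_mat m A" shows "hermitian_mat m (of_real c \<cdot>\<^sub>m A)"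
  unfolding hermitian_mat_def
proof (intro conjI allI impI)
  show "of_real c \<cdot>\<^sub>m A \<in> carrier_mat m m" using hermitian_matD(1)[OF assms] by auto
  fix i j assume ij: "i < m" "j < m"
  then show "(of_real c \<cdot>\<^sub>m A) $$ (j, i) = cnj ((of_real c \<cdot>\<^sub>m A) $$ (i, j))"
    using hermitian_matD(1)[OF assms] hermitian_matD(2)[OF assms ij] by simp
qed

lemma sq_norm_nonneg: "0 \<le> sq_norm m v"
  unfolding sq_norm_def by (intro sum_nonneg) auto

lemma norm_le_sq_norm: "i < m \<Longrightarrow> (cmod (v$i))\<^sup>2 \<le> sq_norm m v"
  unfolding sq_norm_def by (intro member_le_sum) auto

lemma sq_norm_eq_0: assumes "v \<in> carrier_vec m" "sq_norm m v = 0" shows "v = 0\<^sub>v m"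
proof (rule eq_vecI)
  fix i assume i: "i < dim_vec (0\<^sub>v m)"
  then have "(cmod (v$i))\<^sup>2 \<le> 0" using norm_le_sq_norm[of i m v] assms by simp
  then show "v $ i = 0\<^sub>v m $ i" using i by simp
qed (use assms in auto)

lemma hform_self_eq_sq_norm: "(\<Sum>i<m. cnj (v$i) * v$i) = of_real (sq_norm m v)"
proof -
  have "cnj (v$i) * v$i = of_real ((cmod (v$i))\<^sup>2)" for i
    by (metis complex_norm_square mult.commute)
  then show ?thesis unfolding sq_norm_def by simp
qed

lemma norm_mult_le_sq_norm:
  assumes "i < m" "j < m"
  shows "cmod (v$i) * cmod (v$j) \<le> sq_norm m v"
proof -
  have "cmod (v$i) * cmod (v$j) \<le> max ((cmod (v$i))\<^sup>2) ((cmod (v$j))\<^sup>2)"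
  proof (cases "cmod (v$i) \<le> cmod (v$j)")
    case True
    then have "cmod (v$i) * cmod (v$j) \<le> cmod (v$j) * cmod (v$j)" by (intro mult_right_mono) auto
    then show ?thesis by (simp add: power2_eq_square)
  next
    case False
    then have "cmod (v$i) * cmod (v$j) \<le> cmod (v$i) * cmod (v$i)" by (intro mult_left_mono) auto
    then show ?thesis by (simp add: power2_eq_square)
  qed
  also have "\<dots> \<le> sq_norm m v" using norm_le_sq_norm[OF assms(1)] norm_le_sq_norm[OF assms(2)] by simp
  finally show ?thesis .
qed

lemma cmod_hform_le: "cmod (hform m K v v) \<le> entry_norm m K * sq_norm m v"
proof -
  have "cmod (hform m K v v) \<le> (\<Sum>i<m. \<Sum>j<m. cmod (cnj (v$i) * K$$(i,j) * v$j))"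
    unfolding hform_def by (rule order.trans[OF norm_sum sum_mono[OF norm_sum]])
  also have "\<dots> \<le> (\<Sum>i<m. \<Sum>j<m. cmod (K$$(i,j)) * sq_norm m v)"
  proof (intro sum_mono)
    fix i j assume "i \<in> {..<m}" "j \<in> {..<m}"
    then have "cmod (K$$(i,j)) * (cmod (v$i) * cmod (v$j)) \<le> cmod (K$$(i,j)) * sq_norm m v"
      by (intro mult_left_mono norm_mult_le_sq_norm) auto
    then show "cmod (cnj (v$i) * K$$(i,j) * v$j) \<le> cmod (K$$(i,j)) * sq_norm m v"
      by (simp add: norm_mult algebra_simps)
  qed
  finally show ?thesis unfolding entry_norm_def by (simp add: sum_distrib_right)
qed

lemma linear_coeff_zero_if_quadratic_nonneg:
  fixes a b :: real
  assumes "\<forall>s. 0 \<le> 2*s*a + s\<^sup>2*b" "0 \<le> b" shows "a = 0"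
proof (rule ccontr)
  assume a: "a \<noteq> 0"
  define s where "s = -a/(b+1)"
  have b1: "b + 1 > 0" using assms by simp
  have sb: "s*(b+1) = -a" using b1 by (simp add: s_def)
  have "(2*s*a + s\<^sup>2*b) * (b+1)\<^sup>2 = 2*a*(s*(b+1))*(b+1) + (s*(b+1))\<^sup>2*b"
    by (simp add: algebra_simps power2_eq_square)
  also have "\<dots> = -(a\<^sup>2 * (b+2))" unfolding sb by (simp add: algebra_simps power2_eq_square)
  also have "\<dots> < 0" using a assms by (simp add: mult_pos_pos)
  finally have "2*s*a + s\<^sup>2*b < 0"
    using b1 by (metis mult_less_0_iff not_square_less_zero zero_less_power)
  then show False using assms(1) by (meson not_le)
qed

lemma cpx_psd_kernel:
  assumes psd: "cpx_psd m H" and v: "v \<in> carrier_vec m" and zero: "Re (hform m H v v) = 0"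
  shows "H *\<^sub>v v = 0\<^sub>v m"
proof -
  have herm: "hermitian_mat m H" and pos: "\<And>x. x \<in> carrier_vec m \<Longrightarrow> 0 \<le> Re (hform m H x x)"
    using psd unfolding cpx_psd_iff by auto
  have H: "H \<in> carrier_mat m m" by (rule hermitian_matD(1)[OF herm])
  have orth: "Re (hform m H u v) = 0" if u: "u \<in> carrier_vec m" for u
  proof (rule linear_coeff_zero_if_quadratic_nonneg)
    show "0 \<le> Re (hform m H u u)" by (rule pos[OF u])
    show "\<forall>s. 0 \<le> 2 * s * Re (hform m H u v) + s\<^sup>2 * Re (hform m H u u)"
    proof
      fix s :: real
      have "0 \<le> Re (hform m H (v + of_real s \<cdot>\<^sub>v u) (v + of_real s \<cdot>\<^sub>v u))"
        using u v by (intro pos) auto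
      also have "\<dots> = Re (hform m H v v) + s * (Re (hform m H v u) + Re (hform m H u v))
          + s\<^sup>2 * Re (hform m H u u)"
        unfolding hform_expand[OF v u] by simp
      also have "Re (hform m H v u) = Re (hform m H u v)"
        using hermitian_hform_swap[OF herm, of v u] by simp
      finally show "0 \<le> 2 * s * Re (hform m H u v) + s\<^sup>2 * Re (hform m H u u)" using zero by simp
    qed
  qed
  let ?u = "H *\<^sub>v v"
  have u: "?u \<in> carrier_vec m" using H v by auto
  have "hform m H ?u v = of_real (sq_norm m ?u)"
    unfolding hform_mult_mat_vec[OF H v] by (rule hform_self_eq_sq_norm)
  then have "sq_norm m ?u = 0" using orth[OF u] by simp
  then show ?thesis by (rule sq_norm_eq_0[OF u])
qed

text \<open>Test the form on \<open>v - B v / C\<close> with \<open>C = entry_norm m B + 1\<close>.\<close>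
lemma cpx_psd_invertible_coercive:
  assumes psd: "cpx_psd m H" and B: "B \<in> carrier_mat m m" and HB: "H * B = 1\<^sub>m m"
    and v: "v \<in> carrier_vec m"
  shows "sq_norm m v \<le> (entry_norm m B + 1) * Re (hform m H v v)"
proof -
  have herm: "hermitian_mat m H" and pos: "\<And>x. x \<in> carrier_vec m \<Longrightarrow> 0 \<le> Re (hform m H x x)"
    using psd unfolding cpx_psd_iff by auto
  have H: "H \<in> carrier_mat m m" by (rule hermitian_matD(1)[OF herm])
  define C where "C = entry_norm m B + 1"
  have C: "1 \<le> C" unfolding C_def entry_norm_def by (simp add: sum_nonneg)
  define w where "w = B *\<^sub>v v"
  have w: "w \<in> carrier_vec m" using B v by (simp add: w_def)
  have Hw: "H *\<^sub>v w = v"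
    unfolding w_def by (metis B HB assoc_mult_mat_vec H one_mult_mat_vec v)
  have vw: "hform m H v w = of_real (sq_norm m v)"
    unfolding hform_mult_mat_vec[OF H w] Hw by (rule hform_self_eq_sq_norm)
  have wv: "hform m H w v = of_real (sq_norm m v)"
    using hermitian_hform_swap[OF herm, of w v] vw by simp
  have "hform m H w w = cnj (hform m B v v)"
    unfolding hform_mult_mat_vec[OF H w] hform_mult_mat_vec[OF B v] Hw w_def[symmetric]
    by (simp add: mult.commute)
  then have ww: "Re (hform m H w w) \<le> C * sq_norm m v"
    using cmod_hform_le[of m B v] complex_Re_le_cmod[of "hform m H w w"] sq_norm_nonneg[of m v]
    unfolding C_def by (simp add: distrib_right)
  define s where "s = - 1 / C"
  have "0 \<le> Re (hform m H (v + of_real s \<cdot>\<^sub>v w) (v + of_real s \<cdot>\<^sub>v w))"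
    using v w by (intro pos) auto
  also have "\<dots> = Re (hform m H v v) - 2 * sq_norm m v / C + Re (hform m H w w) / C\<^sup>2"
    unfolding hform_expand[OF v w] vw wv s_def by (simp add: power2_eq_square)
  also have "\<dots> \<le> Re (hform m H v v) - 2 * sq_norm m v / C + C * sq_norm m v / C\<^sup>2"
    using ww by (simp add: divide_right_mono)
  also have "\<dots> = Re (hform m H v v) - sq_norm m v / C"
    using C by (simp add: power2_eq_square field_simps)
  finally show ?thesis using C unfolding C_def[symmetric] by (simp add: field_simps)
qed

lemma cpx_psd_invertible_perturb:
  assumes psd: "cpx_psd m H" and K: "hermitian_mat m K"
    and B: "B \<in> carrier_mat m m" and HB: "H * B = 1\<^sub>m m"
  obtains \<delta> where "\<delta> > 0" "\<And>d. 0 \<le> d \<Longrightarrow> d \<le> \<delta> \<Longrightarrow> cpx_psd m (H + of_real d \<cdot>\<^sub>m K)"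
proof
  have herm: "hermitian_mat m H" using psd unfolding cpx_psd_iff by auto
  define C where "C = entry_norm m B + 1"
  define CK where "CK = entry_norm m K + 1"
  have C: "1 \<le> C" and CK: "1 \<le> CK"
    unfolding C_def CK_def entry_norm_def by (simp_all add: sum_nonneg)
  show "1 / (C * CK) > 0" using C CK by simp
  fix d :: real assume d: "0 \<le> d" "d \<le> 1 / (C * CK)"
  show "cpx_psd m (H + of_real d \<cdot>\<^sub>m K)"
    unfolding cpx_psd_iff
  proof (intro conjI ballI)
    show "hermitian_mat m (H + of_real d \<cdot>\<^sub>m K)" by (intro hermitian_add hermitian_smult_real herm K)
    fix v :: "complex vec" assume v: "v \<in> carrier_vec m"
    have "- (d * Re (hform m K v v)) \<le> d * cmod (hform m K v v)"
      using d abs_Re_le_cmod[of "hform m K v v"] by (simp add: mult_left_mono flip: mult_minus_right)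
    also have "\<dots> \<le> d * (CK * sq_norm m v)"
      using d cmod_hform_le[of m K v] sq_norm_nonneg[of m v]
      by (intro mult_left_mono) (auto simp: CK_def distrib_right)
    also have "\<dots> \<le> 1 / (C * CK) * (CK * sq_norm m v)"
      using d CK sq_norm_nonneg[of m v] by (intro mult_right_mono) auto
    also have "\<dots> \<le> Re (hform m H v v)"
      using cpx_psd_invertible_coercive[OF psd B HB v] C CK unfolding C_def[symmetric]
      by (simp add: field_simps)
    finally show "0 \<le> Re (hform m (H + of_real d \<cdot>\<^sub>m K) v v)"
      using hermitian_matD(1)[OF herm] hermitian_matD(1)[OF K] by (simp add: hform_add hform_smult)
  qed
qed

lemma cpx_psd_at_Sup:
  assumes K: "hermitian_mat m K" and herm: "hermitian_mat m H"
    and S: "0 \<in> S" "bdd_above S" and psd: "\<And>t. t \<in> S \<Longrightarrow> cpx_psd m (H + of_real t \<cdot>\<^sub>m K)"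
  shows "cpx_psd m (H + of_real (Sup S) \<cdot>\<^sub>m K)"
proof -
  have H: "H \<in> carrier_mat m m" and KC: "K \<in> carrier_mat m m"
    using hermitian_matD(1) herm K by auto
  define \<alpha> where "\<alpha> v = Re (hform m H v v)" for v
  define \<beta> where "\<beta> v = Re (hform m K v v)" for v
  have psd_iff: "cpx_psd m (H + of_real t \<cdot>\<^sub>m K) \<longleftrightarrow> (\<forall>v\<in>carrier_vec m. 0 \<le> \<alpha> v + t * \<beta> v)" for t
    unfolding cpx_psd_iff \<alpha>_def \<beta>_def using H KC
    by (simp add: hermitian_add hermitian_smult_real herm K hform_add hform_smult)
  show ?thesis unfolding psd_iff
  proof
    fix v :: "complex vec" assume v: "v \<in> carrier_vec m"
    have \<alpha>: "0 \<le> \<alpha> v" using psd[OF S(1)] v unfolding psd_iff by simp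
    show "0 \<le> \<alpha> v + Sup S * \<beta> v"
    proof (cases "0 \<le> \<beta> v")
      case True
      then show ?thesis using \<alpha> cSup_upper[OF S] by simp
    next
      case False
      have "t \<le> \<alpha> v / (- \<beta> v)" if "t \<in> S" for t
        using psd[OF that] v False unfolding psd_iff by (auto simp: field_simps)
      then have "Sup S \<le> \<alpha> v / (- \<beta> v)" using S by (intro cSup_least) auto
      then show ?thesis using False by (simp add: field_simps)
    qed
  qed
qed

text \<open>Continuity argument: the set of \<open>t\<close> at which \<open>H + t K\<close> is positive semidefinite is
  a closed interval containing \<open>0\<close>; by the perturbation lemma it can only end at a
  singular matrix.\<close>
lemma cpx_psd_path_end:
  assumes psd0: "cpx_psd m H" and K: "hermitian_mat m K" and c: "0 \<le> c"
    and nonsingular: "\<And>t v. 0 \<le> t \<Longrightarrow> t < c \<Longrightarrow> v \<in> carrier_vec m \<Longrightarrow>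
      (H + of_real t \<cdot>\<^sub>m K) *\<^sub>v v = 0\<^sub>v m \<Longrightarrow> v = 0\<^sub>v m"
  shows "cpx_psd m (H + of_real c \<cdot>\<^sub>m K)"
proof -
  have herm: "hermitian_mat m H" using psd0 unfolding cpx_psd_iff by simp
  have HC: "H \<in> carrier_mat m m" and KC: "K \<in> carrier_mat m m"
    using hermitian_matD(1) herm K by auto
  define S where "S = {t. 0 \<le> t \<and> t \<le> c \<and> cpx_psd m (H + of_real t \<cdot>\<^sub>m K)}"
  define T where "T = Sup S"
  have "H + of_real 0 \<cdot>\<^sub>m K = H" using HC KC by (intro eq_matI) auto
  then have S0: "0 \<in> S" unfolding S_def using c psd0 by simp
  have bdd: "bdd_above S" unfolding S_def by (rule bdd_aboveI[of _ c]) auto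
  have T0: "0 \<le> T" unfolding T_def using S0 bdd by (rule cSup_upper)
  have Tc: "T \<le> c" unfolding T_def using S0 by (intro cSup_least) (auto simp: S_def)
  have psdT: "cpx_psd m (H + of_real T \<cdot>\<^sub>m K)"
    unfolding T_def using cpx_psd_at_Sup[OF K herm S0 bdd] by (simp add: S_def)
  show ?thesis
  proof (cases "T = c")
    case True
    then show ?thesis using psdT by simp
  next
    case False
    then have Tc: "T < c" using Tc by simp
    let ?HT = "H + of_real T \<cdot>\<^sub>m K"
    have HT: "?HT \<in> carrier_mat m m" using HC KC by simp
    have "det ?HT \<noteq> 0"
      using nonsingular[OF T0 Tc] det_0_iff_vec_prod_zero[OF HT] by auto
    from det_non_zero_imp_unit[OF HT this, unfolded Units_def, of "()"]
    obtain B where B: "B \<in> carrier_mat m m" and HB: "?HT * B = 1\<^sub>m m"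
      by (auto simp: ring_mat_def)
    obtain \<delta> where \<delta>: "\<delta> > 0" and perturb: "\<And>d. 0 \<le> d \<Longrightarrow> d \<le> \<delta> \<Longrightarrow> cpx_psd m (?HT + of_real d \<cdot>\<^sub>m K)"
      using cpx_psd_invertible_perturb[OF psdT K B HB] by blast
    define d where "d = min \<delta> (c - T)"
    have d: "0 < d" "d \<le> \<delta>" "T + d \<le> c" unfolding d_def using \<delta> Tc by auto
    have "?HT + of_real d \<cdot>\<^sub>m K = H + of_real (T + d) \<cdot>\<^sub>m K"
      using HC KC by (intro eq_matI) (auto simp: algebra_simps)
    then have "T + d \<in> S" unfolding S_def using perturb[of d] T0 d by auto
    then have "T + d \<le> T" unfolding T_def using bdd by (rule cSup_upper)
    then show ?thesis using d by simp
  qed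
qed

section \<open>The symplectic form\<close>

lemma cmat_carrier [simp]: "X \<in> carrier_mat a b \<Longrightarrow> cmat X \<in> carrier_mat a b"
  unfolding cmat_def by simp

lemma cmat_dims [simp]: "dim_row (cmat X) = dim_row X" "dim_col (cmat X) = dim_col X"
  unfolding cmat_def by auto

lemma cmat_index [simp]:
  "i < dim_row X \<Longrightarrow> j < dim_col X \<Longrightarrow> cmat X $$ (i,j) = of_real (X $$ (i,j))"
  unfolding cmat_def by simp

lemma cmat_mult: "A \<in> carrier_mat a b \<Longrightarrow> B \<in> carrier_mat b c \<Longrightarrow> cmat (A * B) = cmat A * cmat B"
  unfolding cmat_def by (rule of_real_hom.mat_hom_mult)

lemma cmat_smult: "cmat (c \<cdot>\<^sub>m Y) = of_real c \<cdot>\<^sub>m cmat Y"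
  by (rule eq_matI) (auto simp: cmat_def)

lemma cmat_mult_vec_cnj:
  assumes X: "X \<in> carrier_mat m m" and v: "v \<in> carrier_vec m"
  shows "cmat X *\<^sub>v map_vec cnj v = map_vec cnj (cmat X *\<^sub>v v)"
proof (rule eq_vecI)
  have XC: "cmat X \<in> carrier_mat m m" and v': "map_vec cnj v \<in> carrier_vec m" using X v by auto
  fix l assume "l < dim_vec (map_vec cnj (cmat X *\<^sub>v v))"
  then have l: "l < m" using X by simp
  have "(\<Sum>j<m. cmat X $$ (l, j) * map_vec cnj v $ j) = (\<Sum>j<m. cnj (cmat X $$ (l, j) * v $ j))"
    using X v l by (intro sum.cong refl) simp
  moreover have "map_vec cnj (cmat X *\<^sub>v v) $ l = cnj ((cmat X *\<^sub>v v) $ l)"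
    using X l by (subst index_map_vec) auto
  ultimately show "(cmat X *\<^sub>v map_vec cnj v) $ l = map_vec cnj (cmat X *\<^sub>v v) $ l"
    unfolding mult_mat_vec_index_sum[OF XC v l] mult_mat_vec_index_sum[OF XC v' l] by simp
qed (use X in simp)

definition partner :: "nat \<Rightarrow> nat" where
  "partner i = (if even i then i + 1 else i - 1)"

definition parity_sign :: "nat \<Rightarrow> real" where
  "parity_sign i = (if even i then 1 else -1)"

lemma partner_less: "i < 2*n \<Longrightarrow> partner i < 2*n"
  unfolding partner_def by presburger

lemma partner_partner [simp]: "partner (partner i) = i"
  unfolding partner_def by presburger

lemma partner_eq_iff: "k = partner i \<longleftrightarrow> i = partner k"
  by (metis partner_partner)

lemma parity_sign_partner [simp]: "parity_sign (partner i) = - parity_sign i"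
  unfolding partner_def parity_sign_def by (cases "even i") (auto elim: oddE)

lemma parity_sign_sq [simp]: "parity_sign i * parity_sign i = 1"
  unfolding parity_sign_def by simp

lemma sympl_carrier [simp]: "sympl n \<in> carrier_mat (2*n) (2*n)"
  unfolding sympl_def by simp

lemma sympl_dims [simp]: "dim_row (sympl n) = 2*n" "dim_col (sympl n) = 2*n"
  unfolding sympl_def by auto

lemma sympl_index:
  assumes "i < 2*n" "j < 2*n"
  shows "sympl n $$ (i,j) = (if j = partner i then parity_sign i else 0)"
  using assms unfolding sympl_def partner_def parity_sign_def by (cases "even i") (auto elim: oddE)

lemma sympl_mult_sympl: "sympl n * sympl n = - 1\<^sub>m (2*n)"
proof (rule eq_matI)
  fix i j assume "i < dim_row (- 1\<^sub>m (2*n) :: real mat)" "j < dim_col (- 1\<^sub>m (2*n) :: real mat)"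
  then have ij: "i < 2*n" "j < 2*n" by auto
  have "(sympl n * sympl n) $$ (i,j) =
      (\<Sum>k<2*n. if k = partner i then parity_sign i * sympl n $$ (k,j) else 0)"
    unfolding times_mat_index_sum[OF sympl_carrier sympl_carrier ij]
    using ij by (intro sum.cong refl) (auto simp: sympl_index)
  also have "\<dots> = parity_sign i * sympl n $$ (partner i, j)"
    by (rule sum_lessThan_delta[OF partner_less[OF ij(1)]])
  also have "\<dots> = (- 1\<^sub>m (2*n)) $$ (i,j)"
    using ij partner_less[OF ij(1)] by (auto simp: sympl_index partner_eq_iff)
  finally show "(sympl n * sympl n) $$ (i,j) = (- 1\<^sub>m (2*n)) $$ (i,j)" .
qed auto

definition i_sympl :: "nat \<Rightarrow> complex mat" where
  "i_sympl n = \<i> \<cdot>\<^sub>m cmat (sympl n)"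

lemma i_sympl_carrier [simp]: "i_sympl n \<in> carrier_mat (2*n) (2*n)"
  unfolding i_sympl_def by simp

lemma i_sympl_dims [simp]: "dim_row (i_sympl n) = 2*n" "dim_col (i_sympl n) = 2*n"
  unfolding i_sympl_def by auto

lemma plus_i_sigma_eq: "plus_i_sigma n X = cmat X + i_sympl n"
  unfolding plus_i_sigma_def i_sympl_def ..

lemma minus_i_sigma_eq: "minus_i_sigma n X = cmat X - i_sympl n"
  unfolding minus_i_sigma_def i_sympl_def ..

lemma i_sigma_mat_eq: "X \<in> carrier_mat (2*n) (2*n) \<Longrightarrow> i_sigma_mat n X = i_sympl n * cmat X"
  unfolding i_sigma_mat_def i_sympl_def
  using mult_smult_assoc_mat[of "cmat (sympl n)" "2*n" "2*n" "cmat X" "2*n" \<i>] by simp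

lemma i_sigma_mat_carrier:
  "X \<in> carrier_mat (2*n) (2*n) \<Longrightarrow> i_sigma_mat n X \<in> carrier_mat (2*n) (2*n)"
  unfolding i_sigma_mat_eq by (rule mult_carrier_mat[OF i_sympl_carrier cmat_carrier])

lemma i_sympl_mult_i_sympl: "i_sympl n * i_sympl n = 1\<^sub>m (2*n)"
proof -
  have S: "cmat (sympl n) \<in> carrier_mat (2*n) (2*n)" by simp
  have "cmat (sympl n) * cmat (sympl n) = cmat (- 1\<^sub>m (2*n))"
    by (simp add: cmat_mult[OF sympl_carrier sympl_carrier, symmetric] sympl_mult_sympl)
  also have "\<dots> = - 1\<^sub>m (2*n)" by (rule eq_matI) (auto simp: cmat_def)
  finally have SS: "cmat (sympl n) * cmat (sympl n) = - 1\<^sub>m (2*n)" .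
  have "i_sympl n * i_sympl n = \<i> \<cdot>\<^sub>m (\<i> \<cdot>\<^sub>m (cmat (sympl n) * cmat (sympl n)))"
    unfolding i_sympl_def mult_smult_assoc_mat[OF S smult_carrier_mat[OF S]] mult_smult_distrib[OF S S] ..
  also have "\<dots> = 1\<^sub>m (2*n)" unfolding SS by (rule eq_matI) auto
  finally show ?thesis .
qed

lemma transpose_i_sympl: "transpose_mat (i_sympl n) = - i_sympl n"
  unfolding i_sympl_def by (rule eq_matI) (auto simp: sympl_index partner_eq_iff)

lemma hermitian_i_sympl: "hermitian_mat (2*n) (i_sympl n)"
  unfolding hermitian_mat_def i_sympl_def by (auto simp: sympl_index partner_eq_iff)

lemma i_sympl_mult_vec_index:
  assumes w: "w \<in> carrier_vec (2*n)" and l: "l < 2*n"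
  shows "(i_sympl n *\<^sub>v w) $ l = \<i> * (cmat (sympl n) *\<^sub>v w) $ l"
  unfolding mult_mat_vec_index_sum[OF i_sympl_carrier w l]
    mult_mat_vec_index_sum[OF cmat_carrier[OF sympl_carrier] w l] sum_distrib_left
  using l by (intro sum.cong refl) (simp add: i_sympl_def)

lemma i_sympl_mult_vec_cnj:
  assumes v: "v \<in> carrier_vec (2*n)"
  shows "i_sympl n *\<^sub>v map_vec cnj v = - map_vec cnj (i_sympl n *\<^sub>v v)"
proof (rule eq_vecI)
  fix l assume "l < dim_vec (- map_vec cnj (i_sympl n *\<^sub>v v))"
  then have l: "l < 2*n" by simp
  have v': "map_vec cnj v \<in> carrier_vec (2*n)" using v by simp
  show "(i_sympl n *\<^sub>v map_vec cnj v) $ l = (- map_vec cnj (i_sympl n *\<^sub>v v)) $ l"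
    using l unfolding i_sympl_mult_vec_index[OF v' l] cmat_mult_vec_cnj[OF sympl_carrier v]
    by (simp add: i_sympl_mult_vec_index[OF v l])
qed simp

lemma i_sigma_eigen_iff:
  assumes X: "X \<in> carrier_mat (2*n) (2*n)" and v: "v \<in> carrier_vec (2*n)"
  shows "i_sigma_mat n X *\<^sub>v v = \<mu> \<cdot>\<^sub>v v \<longleftrightarrow> cmat X *\<^sub>v v = \<mu> \<cdot>\<^sub>v (i_sympl n *\<^sub>v v)"
proof -
  let ?K = "i_sympl n"
  have K: "?K \<in> carrier_mat (2*n) (2*n)" by simp
  have XC: "cmat X \<in> carrier_mat (2*n) (2*n)" using X by simp
  have "?K *\<^sub>v (i_sigma_mat n X *\<^sub>v v) = ((?K * ?K) * cmat X) *\<^sub>v v"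
    unfolding i_sigma_mat_eq[OF X] assoc_mult_mat[OF K K XC]
    using K XC v by (simp add: assoc_mult_mat_vec[OF K mult_carrier_mat[OF K XC] v, symmetric])
  then have Xv: "cmat X *\<^sub>v v = ?K *\<^sub>v (i_sigma_mat n X *\<^sub>v v)"
    using XC v by (simp add: i_sympl_mult_i_sympl left_mult_one_mat[OF XC])
  show ?thesis
  proof
    assume "i_sigma_mat n X *\<^sub>v v = \<mu> \<cdot>\<^sub>v v"
    then show "cmat X *\<^sub>v v = \<mu> \<cdot>\<^sub>v (?K *\<^sub>v v)" using Xv K v by (simp add: mult_mat_vec)
  next
    assume eig: "cmat X *\<^sub>v v = \<mu> \<cdot>\<^sub>v (?K *\<^sub>v v)"
    have "i_sigma_mat n X *\<^sub>v v = ?K *\<^sub>v (cmat X *\<^sub>v v)"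
      unfolding i_sigma_mat_eq[OF X] by (rule assoc_mult_mat_vec[OF K XC v])
    also have "\<dots> = \<mu> \<cdot>\<^sub>v ((?K * ?K) *\<^sub>v v)"
      unfolding eig mult_mat_vec[OF K mult_mat_vec_carrier[OF K v]] assoc_mult_mat_vec[OF K K v] ..
    finally show "i_sigma_mat n X *\<^sub>v v = \<mu> \<cdot>\<^sub>v v" using v by (simp add: i_sympl_mult_i_sympl)
  qed
qed

lemma hform_eigen:
  assumes M: "M \<in> carrier_mat m m" and N: "N \<in> carrier_mat m m" and v: "v \<in> carrier_vec m"
    and eig: "M *\<^sub>v v = \<mu> \<cdot>\<^sub>v (N *\<^sub>v v)"
  shows "hform m M u v = \<mu> * hform m N u v"
  unfolding hform_mult_mat_vec[OF M v] hform_mult_mat_vec[OF N v] eig sum_distrib_left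
  using N v by (intro sum.cong refl) auto

lemma kernel_add_smult_eigen:
  fixes A B :: "'a :: comm_ring_1 mat"
  assumes A: "A \<in> carrier_mat m m" and B: "B \<in> carrier_mat m m" and v: "v \<in> carrier_vec m"
    and kernel: "(A + c \<cdot>\<^sub>m B) *\<^sub>v v = 0\<^sub>v m"
  shows "A *\<^sub>v v = (- c) \<cdot>\<^sub>v (B *\<^sub>v v)"
proof (rule eq_vecI)
  fix l assume "l < dim_vec ((- c) \<cdot>\<^sub>v (B *\<^sub>v v))"
  then have l: "l < m" using B by simp
  have "(\<Sum>j<m. (A + c \<cdot>\<^sub>m B) $$ (l,j) * v $ j) = 0"
    using arg_cong[OF kernel, of "\<lambda>x. x $ l"] l
    unfolding mult_mat_vec_index_sum[OF add_carrier_mat[OF smult_carrier_mat[OF B]] v l] by simp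
  then have "(\<Sum>j<m. A $$ (l,j) * v $ j) + c * (\<Sum>j<m. B $$ (l,j) * v $ j) = 0"
    using A B l by (simp add: sum.distrib sum_distrib_left algebra_simps)
  then have "(\<Sum>j<m. A $$ (l,j) * v $ j) = - (c * (\<Sum>j<m. B $$ (l,j) * v $ j))"
    by (rule eq_neg_iff_add_eq_0[THEN iffD2])
  then show "(A *\<^sub>v v) $ l = ((- c) \<cdot>\<^sub>v (B *\<^sub>v v)) $ l"
    unfolding mult_mat_vec_index_sum[OF A v l] using B l by (simp add: mult_mat_vec_index_sum[OF B v l])
qed (use A B in simp)

section \<open>Covariance matrices\<close>

lemma real_sym_hermitian:
  assumes "real_sym m Y" shows "hermitian_mat m (cmat Y)"
  unfolding hermitian_mat_def
proof (intro conjI allI impI)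
  have Y: "Y \<in> carrier_mat m m" and t: "transpose_mat Y = Y" using assms real_sym_def by auto
  show "cmat Y \<in> carrier_mat m m" using Y by simp
  fix i j assume ij: "i < m" "j < m"
  have "Y $$ (j,i) = Y $$ (i,j)" using t ij Y by (metis carrier_matD index_transpose_mat(1))
  then show "cmat Y $$ (j, i) = cnj (cmat Y $$ (i, j))" using ij Y by simp
qed

lemma real_sym_smult:
  assumes "real_sym m Y" shows "real_sym m (c \<cdot>\<^sub>m Y)"
proof -
  have Y: "Y \<in> carrier_mat m m" and t: "transpose_mat Y = Y" using assms real_sym_def by auto
  have "transpose_mat (c \<cdot>\<^sub>m Y) = c \<cdot>\<^sub>m transpose_mat Y" by (rule eq_matI) auto
  then show ?thesis using Y t unfolding real_sym_def by simp
qed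

lemma real_psd_smult:
  assumes "real_psd m Y" "0 \<le> c" shows "real_psd m (c \<cdot>\<^sub>m Y)"
  unfolding real_psd_def
proof (intro conjI ballI)
  have Y: "Y \<in> carrier_mat m m" using assms real_psd_def by auto
  then show "c \<cdot>\<^sub>m Y \<in> carrier_mat m m" by simp
  fix v :: "real vec" assume v: "v \<in> carrier_vec m"
  have "(c \<cdot>\<^sub>m Y) *\<^sub>v v = c \<cdot>\<^sub>v (Y *\<^sub>v v)" using Y v by (auto intro!: eq_vecI)
  moreover have "0 \<le> v \<bullet> (Y *\<^sub>v v)" using assms v real_psd_def by auto
  ultimately show "0 \<le> v \<bullet> (c \<cdot>\<^sub>m Y *\<^sub>v v)" using assms(2) v Y by simp
qed

lemma cov_mats_carrier: "g \<in> cov_mats n \<Longrightarrow> g \<in> carrier_mat (2*n) (2*n)"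
  unfolding cov_mats_def real_sym_def by auto

lemma cov_mats_hermitian: "g \<in> cov_mats n \<Longrightarrow> hermitian_mat (2*n) (cmat g)"
  unfolding cov_mats_def by (auto intro: real_sym_hermitian)

lemma cov_mats_hform_bound:
  assumes g: "g \<in> cov_mats n" and v: "v \<in> carrier_vec (2*n)"
  shows "\<bar>Re (hform (2*n) (i_sympl n) v v)\<bar> \<le> Re (hform (2*n) (cmat g) v v)"
proof -
  have G: "cmat g \<in> carrier_mat (2*n) (2*n)" using cov_mats_carrier[OF g] by simp
  have "cpx_psd (2*n) (cmat g + i_sympl n)" "cpx_psd (2*n) (cmat g - i_sympl n)"
    using g unfolding cov_mats_def plus_i_sigma_eq minus_i_sigma_eq by auto
  then have "0 \<le> Re (hform (2*n) (cmat g + i_sympl n) v v)"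
    "0 \<le> Re (hform (2*n) (cmat g - i_sympl n) v v)"
    using v unfolding cpx_psd_iff by auto
  then show ?thesis using G by (simp add: hform_add hform_diff)
qed

lemma cov_mats_pos_def:
  assumes g: "g \<in> cov_mats n" and v: "v \<in> carrier_vec (2*n)" and nz: "v \<noteq> 0\<^sub>v (2*n)"
  shows "0 < Re (hform (2*n) (cmat g) v v)"
proof (rule ccontr)
  let ?K = "i_sympl n"
  assume "\<not> ?thesis"
  then have zero: "Re (hform (2*n) (cmat g) v v) = 0" "Re (hform (2*n) ?K v v) = 0"
    using cov_mats_hform_bound[OF g v] by linarith+
  have G: "cmat g \<in> carrier_mat (2*n) (2*n)" using cov_mats_carrier[OF g] by simp
  have "cpx_psd (2*n) (cmat g + ?K)" "cpx_psd (2*n) (cmat g - ?K)"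
    using g unfolding cov_mats_def plus_i_sigma_eq minus_i_sigma_eq by auto
  then have "(cmat g + ?K) *\<^sub>v v = 0\<^sub>v (2*n)" "(cmat g - ?K) *\<^sub>v v = 0\<^sub>v (2*n)"
    using zero G v by (auto intro!: cpx_psd_kernel simp: hform_add hform_diff)
  then have sum: "cmat g *\<^sub>v v + ?K *\<^sub>v v = 0\<^sub>v (2*n)"
    and diff: "cmat g *\<^sub>v v - ?K *\<^sub>v v = 0\<^sub>v (2*n)"
    using G v by (simp_all add: add_mult_distrib_mat_vec minus_mult_distrib_mat_vec)
  have Kv: "?K *\<^sub>v v = 0\<^sub>v (2*n)"
  proof (rule eq_vecI)
    fix l assume "l < dim_vec (0\<^sub>v (2*n) :: complex vec)"
    then have l: "l < 2*n" by simp
    have "(?K *\<^sub>v v) $ l = ((cmat g *\<^sub>v v + ?K *\<^sub>v v) $ l - (cmat g *\<^sub>v v - ?K *\<^sub>v v) $ l) / 2"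
      using G v l by simp
    also have "\<dots> = 0\<^sub>v (2*n) $ l" unfolding sum diff using l by simp
    finally show "(?K *\<^sub>v v) $ l = 0\<^sub>v (2*n) $ l" .
  qed simp
  have "v = (?K * ?K) *\<^sub>v v" using v by (simp add: i_sympl_mult_i_sympl)
  also have "\<dots> = 0\<^sub>v (2*n)"
    unfolding assoc_mult_mat_vec[OF i_sympl_carrier i_sympl_carrier v] Kv
    using i_sympl_carrier[of n] by auto
  finally show False using nz by simp
qed

lemma cov_mats_smult:
  assumes g: "g \<in> cov_mats n" and c: "1 \<le> c"
  shows "c \<cdot>\<^sub>m g \<in> cov_mats n"
proof -
  let ?K = "i_sympl n" and ?G = "of_real c \<cdot>\<^sub>m cmat g"
  have G: "cmat g \<in> carrier_mat (2*n) (2*n)" using cov_mats_carrier[OF g] by simp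
  have herm: "hermitian_mat (2*n) ?G" by (rule hermitian_smult_real[OF cov_mats_hermitian[OF g]])
  have bound: "\<bar>Re (hform (2*n) ?K v v)\<bar> \<le> Re (hform (2*n) ?G v v)" if v: "v \<in> carrier_vec (2*n)" for v
  proof -
    have "0 \<le> Re (hform (2*n) (cmat g) v v)"
      using cov_mats_hform_bound[OF g v] by linarith
    then have "Re (hform (2*n) (cmat g) v v) \<le> c * Re (hform (2*n) (cmat g) v v)"
      using c by (simp add: mult_le_cancel_right1)
    then show ?thesis using cov_mats_hform_bound[OF g v] G by (simp add: hform_smult)
  qed
  have "cpx_psd (2*n) (?G + ?K)"
    unfolding cpx_psd_iff
  proof (intro conjI ballI)
    show "hermitian_mat (2*n) (?G + ?K)" by (intro hermitian_add herm hermitian_i_sympl)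
    fix v :: "complex vec" assume "v \<in> carrier_vec (2*n)"
    then show "0 \<le> Re (hform (2*n) (?G + ?K) v v)"
      using bound G by (fastforce simp: hform_add abs_le_iff)
  qed
  moreover have "cpx_psd (2*n) (?G - ?K)"
    unfolding cpx_psd_iff
  proof (intro conjI ballI)
    show "hermitian_mat (2*n) (?G - ?K)" by (intro hermitian_diff herm hermitian_i_sympl)
    fix v :: "complex vec" assume "v \<in> carrier_vec (2*n)"
    then show "0 \<le> Re (hform (2*n) (?G - ?K) v v)"
      using bound G by (fastforce simp: hform_diff abs_le_iff)
  qed
  moreover have "real_sym (2*n) (c \<cdot>\<^sub>m g)" "real_psd (2*n) (c \<cdot>\<^sub>m g)"
    using g c unfolding cov_mats_def by (auto intro: real_sym_smult real_psd_smult)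
  ultimately show ?thesis
    unfolding cov_mats_def plus_i_sigma_eq minus_i_sigma_eq by (simp add: cmat_smult)
qed

lemma cov_mats_symp_eigenvalue_ge_1:
  assumes g: "g \<in> cov_mats n" and eig: "eigenvalue (i_sigma_mat n g) \<mu>"
  shows "1 \<le> cmod \<mu>"
proof -
  let ?K = "i_sympl n"
  have gC: "g \<in> carrier_mat (2*n) (2*n)" by (rule cov_mats_carrier[OF g])
  have "dim_row (i_sigma_mat n g) = 2*n" using gC by (simp add: i_sigma_mat_def)
  with eig obtain v where v: "v \<in> carrier_vec (2*n)" "v \<noteq> 0\<^sub>v (2*n)"
    and Av: "i_sigma_mat n g *\<^sub>v v = \<mu> \<cdot>\<^sub>v v"
    unfolding eigenvalue_def eigenvector_def by auto
  define a where "a = hform (2*n) (cmat g) v v"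
  define b where "b = hform (2*n) ?K v v"
  have ab: "a = \<mu> * b" unfolding a_def b_def
    using gC v Av i_sigma_eigen_iff[OF gC v(1)] by (intro hform_eigen) auto
  have a: "0 < Re a" "Im a = 0" and b: "\<bar>Re b\<bar> \<le> Re a" "Im b = 0"
    unfolding a_def b_def using cov_mats_pos_def[OF g v] cov_mats_hform_bound[OF g v(1)]
      hermitian_hform_real[OF cov_mats_hermitian[OF g]] hermitian_hform_real[OF hermitian_i_sympl]
    by auto
  have "cmod a = Re a" "cmod b = \<bar>Re b\<bar>" using a b by (simp_all add: cmod_eq_Re)
  then have ra: "Re a = cmod \<mu> * \<bar>Re b\<bar>" using ab by (simp add: norm_mult)
  then have "0 < \<bar>Re b\<bar>" using a(1) by (cases "Re b = 0") auto
  moreover have "\<bar>Re b\<bar> \<le> cmod \<mu> * \<bar>Re b\<bar>" using b(1) ra by simp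
  ultimately show ?thesis by (simp add: mult_le_cancel_right1)
qed

section \<open>Partial transposition\<close>

definition pt_sign :: "nat \<Rightarrow> nat \<Rightarrow> real" where
  "pt_sign NA i = (if i < 2*NA \<and> odd i then -1 else 1)"

lemma pt_sign_sq [simp]: "pt_sign NA i * pt_sign NA i = 1"
  unfolding pt_sign_def by simp

lemma pt_mat_carrier [simp]: "pt_mat NA NB \<in> carrier_mat (2*(NA+NB)) (2*(NA+NB))"
  unfolding pt_mat_def by simp

lemma pt_mat_dims [simp]: "dim_row (pt_mat NA NB) = 2*(NA+NB)" "dim_col (pt_mat NA NB) = 2*(NA+NB)"
  unfolding pt_mat_def by auto

lemma pt_mat_index:
  "i < 2*(NA+NB) \<Longrightarrow> j < 2*(NA+NB) \<Longrightarrow> pt_mat NA NB $$ (i,j) = (if i = j then pt_sign NA i else 0)"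
  unfolding pt_mat_def pt_sign_def by simp

lemma pt_mat_mult_pt_mat: "pt_mat NA NB * pt_mat NA NB = 1\<^sub>m (2*(NA+NB))"
proof (rule eq_matI)
  let ?m = "2*(NA+NB)"
  fix i j assume "i < dim_row (1\<^sub>m ?m :: real mat)" "j < dim_col (1\<^sub>m ?m :: real mat)"
  then have ij: "i < ?m" "j < ?m" by auto
  have "(pt_mat NA NB * pt_mat NA NB) $$ (i,j) =
      (\<Sum>k<?m. if k = i then (if i = j then pt_sign NA i * pt_sign NA i else 0) else 0)"
    unfolding times_mat_index_sum[OF pt_mat_carrier pt_mat_carrier ij]
    using ij by (intro sum.cong refl) (auto simp: pt_mat_index)
  also have "\<dots> = 1\<^sub>m ?m $$ (i,j)" using ij by (simp add: sum_lessThan_delta)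
  finally show "(pt_mat NA NB * pt_mat NA NB) $$ (i,j) = 1\<^sub>m ?m $$ (i,j)" .
qed auto

lemma partial_transpose_carrier [simp]:
  "g \<in> carrier_mat (2*(NA+NB)) (2*(NA+NB)) \<Longrightarrow>
    partial_transpose NA NB g \<in> carrier_mat (2*(NA+NB)) (2*(NA+NB))"
  unfolding partial_transpose_def by (rule mult_carrier_mat[OF mult_carrier_mat[OF pt_mat_carrier] pt_mat_carrier])

lemma partial_transpose_dims [simp]:
  "g \<in> carrier_mat (2*(NA+NB)) (2*(NA+NB)) \<Longrightarrow> dim_row (partial_transpose NA NB g) = 2*(NA+NB)"
  "g \<in> carrier_mat (2*(NA+NB)) (2*(NA+NB)) \<Longrightarrow> dim_col (partial_transpose NA NB g) = 2*(NA+NB)"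
  using partial_transpose_carrier by auto

lemma partial_transpose_index:
  assumes g: "g \<in> carrier_mat (2*(NA+NB)) (2*(NA+NB))"
    and i: "i < 2*(NA+NB)" and j: "j < 2*(NA+NB)"
  shows "partial_transpose NA NB g $$ (i,j) = pt_sign NA i * g $$ (i,j) * pt_sign NA j"
proof -
  let ?m = "2*(NA+NB)" and ?P = "pt_mat NA NB"
  have Pg: "?P * g \<in> carrier_mat ?m ?m" using g by (rule mult_carrier_mat[OF pt_mat_carrier])
  have row: "(?P * g) $$ (i,k) = pt_sign NA i * g $$ (i,k)" if k: "k < ?m" for k
  proof -
    have "(?P * g) $$ (i,k) = (\<Sum>l<?m. if l = i then pt_sign NA i * g $$ (l,k) else 0)"
      unfolding times_mat_index_sum[OF pt_mat_carrier g i k]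
      using i by (intro sum.cong refl) (auto simp: pt_mat_index)
    also have "\<dots> = pt_sign NA i * g $$ (i,k)" using i by (simp add: sum_lessThan_delta)
    finally show ?thesis .
  qed
  have "partial_transpose NA NB g $$ (i,j) =
      (\<Sum>k<?m. if k = j then pt_sign NA i * g $$ (i,k) * pt_sign NA j else 0)"
    unfolding partial_transpose_def times_mat_index_sum[OF Pg pt_mat_carrier i j]
    using j by (intro sum.cong refl) (auto simp: pt_mat_index row)
  also have "\<dots> = pt_sign NA i * g $$ (i,j) * pt_sign NA j" using j by (simp add: sum_lessThan_delta)
  finally show ?thesis .
qed

lemma real_sym_partial_transpose:
  assumes "real_sym (2*(NA+NB)) g"
  shows "real_sym (2*(NA+NB)) (partial_transpose NA NB g)"
proof -
  have g: "g \<in> carrier_mat (2*(NA+NB)) (2*(NA+NB))" and t: "transpose_mat g = g"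
    using assms real_sym_def by auto
  have sym: "g $$ (j,i) = g $$ (i,j)" if "i < 2*(NA+NB)" "j < 2*(NA+NB)" for i j
    using t that g by (metis carrier_matD index_transpose_mat(1))
  have "transpose_mat (partial_transpose NA NB g) = partial_transpose NA NB g"
    using g by (intro eq_matI) (simp_all add: partial_transpose_index sym)
  then show ?thesis using partial_transpose_carrier[OF g] unfolding real_sym_def by simp
qed

lemma partial_transpose_smult:
  assumes g: "g \<in> carrier_mat (2*(NA+NB)) (2*(NA+NB))"
  shows "partial_transpose NA NB (c \<cdot>\<^sub>m g) = c \<cdot>\<^sub>m partial_transpose NA NB g"
  using g smult_carrier_mat[OF g] by (intro eq_matI) (simp_all add: partial_transpose_index)

lemma det_cmat_partial_transpose:
  assumes g: "g \<in> carrier_mat (2*(NA+NB)) (2*(NA+NB))"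
  shows "det (cmat (partial_transpose NA NB g)) = det (cmat g)"
proof -
  let ?m = "2*(NA+NB)" and ?P = "cmat (pt_mat NA NB)"
  have P: "?P \<in> carrier_mat ?m ?m" and G: "cmat g \<in> carrier_mat ?m ?m"
    using g cmat_carrier[OF pt_mat_carrier] by auto
  have "?P * ?P = cmat (1\<^sub>m ?m)"
    by (simp add: cmat_mult[OF pt_mat_carrier pt_mat_carrier, symmetric] pt_mat_mult_pt_mat)
  also have "\<dots> = 1\<^sub>m ?m" by (rule eq_matI) (auto simp: cmat_def)
  finally have "det ?P * det ?P = 1" using det_mult[OF P P] by simp
  moreover have "cmat (partial_transpose NA NB g) = ?P * cmat g * ?P"
    unfolding partial_transpose_def
    using cmat_mult[OF mult_carrier_mat[OF pt_mat_carrier g] pt_mat_carrier] cmat_mult[OF pt_mat_carrier g]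
    by simp
  ultimately show ?thesis
    using det_mult[OF mult_carrier_mat[OF P G] P] det_mult[OF P G] by (simp add: ac_simps)
qed

definition pt_flip :: "nat \<Rightarrow> nat \<Rightarrow> complex vec \<Rightarrow> complex vec" where
  "pt_flip NA m v = vec m (\<lambda>i. of_real (pt_sign NA i) * v $ i)"

lemma hform_partial_transpose:
  assumes g: "g \<in> carrier_mat (2*(NA+NB)) (2*(NA+NB))"
  shows "hform (2*(NA+NB)) (cmat (partial_transpose NA NB g)) u u =
    hform (2*(NA+NB)) (cmat g) (pt_flip NA (2*(NA+NB)) u) (pt_flip NA (2*(NA+NB)) u)"
  unfolding hform_def pt_flip_def
  using g by (intro sum.cong refl) (auto simp: partial_transpose_index)

lemma pt_flip_eq_0:
  assumes v: "v \<in> carrier_vec m" and zero: "pt_flip NA m v = 0\<^sub>v m" shows "v = 0\<^sub>v m"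
proof (rule eq_vecI)
  fix i assume "i < dim_vec (0\<^sub>v m)"
  then have i: "i < m" by simp
  then have "of_real (pt_sign NA i) * v $ i = 0" using arg_cong[OF zero, of "\<lambda>w. w $ i"]
    by (simp add: pt_flip_def)
  moreover have "pt_sign NA i \<noteq> 0" unfolding pt_sign_def by simp
  ultimately show "v $ i = 0\<^sub>v m $ i" using i by simp
qed (use v in auto)

lemma partial_transpose_pos_def:
  assumes g: "g \<in> cov_mats (NA+NB)" and v: "v \<in> carrier_vec (2*(NA+NB))" and nz: "v \<noteq> 0\<^sub>v (2*(NA+NB))"
  shows "0 < Re (hform (2*(NA+NB)) (cmat (partial_transpose NA NB g)) v v)"
  unfolding hform_partial_transpose[OF cov_mats_carrier[OF g]]
  using nz pt_flip_eq_0[OF v] by (intro cov_mats_pos_def[OF g]) (auto simp: pt_flip_def)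

section \<open>The symplectic spectrum of the partial transpose\<close>

locale bipartite_cov =
  fixes NA NB :: nat and g :: "real mat"
  assumes cov: "g \<in> cov_mats (NA + NB)"
begin

abbreviation "gT \<equiv> partial_transpose NA NB g"
abbreviation "K \<equiv> i_sympl (NA + NB)"

lemma g_carrier: "g \<in> carrier_mat (2*(NA+NB)) (2*(NA+NB))"
  by (rule cov_mats_carrier[OF cov])

lemma gT_carrier: "gT \<in> carrier_mat (2*(NA+NB)) (2*(NA+NB))"
  by (rule partial_transpose_carrier[OF g_carrier])

lemma cmat_gT_carrier: "cmat gT \<in> carrier_mat (2*(NA+NB)) (2*(NA+NB))"
  by (rule cmat_carrier[OF gT_carrier])

lemma gT_hermitian: "hermitian_mat (2*(NA+NB)) (cmat gT)"
  using cov unfolding cov_mats_def by (intro real_sym_hermitian real_sym_partial_transpose) blast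

lemma gT_psd: "cpx_psd (2*(NA+NB)) (cmat gT)"
  unfolding cpx_psd_iff
proof (intro conjI ballI gT_hermitian)
  fix v :: "complex vec" assume v: "v \<in> carrier_vec (2*(NA+NB))"
  show "0 \<le> Re (hform (2*(NA+NB)) (cmat gT) v v)"
  proof (cases "v = 0\<^sub>v (2*(NA+NB))")
    case True
    then show ?thesis by (simp add: hform_def)
  qed (use partial_transpose_pos_def[OF cov v] in \<open>auto intro: less_imp_le\<close>)
qed

lemma symp_eigenvector_cnj:
  assumes v: "v \<in> carrier_vec (2*(NA+NB))"
    and eig: "i_sigma_mat (NA+NB) gT *\<^sub>v v = of_real r \<cdot>\<^sub>v v"
  shows "i_sigma_mat (NA+NB) gT *\<^sub>v map_vec cnj v = of_real (- r) \<cdot>\<^sub>v map_vec cnj v"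
proof -
  have v': "map_vec cnj v \<in> carrier_vec (2*(NA+NB))" using v by simp
  have "cmat gT *\<^sub>v v = of_real r \<cdot>\<^sub>v (K *\<^sub>v v)"
    using eig i_sigma_eigen_iff[OF gT_carrier v] by simp
  then have "cmat gT *\<^sub>v map_vec cnj v = map_vec cnj (of_real r \<cdot>\<^sub>v (K *\<^sub>v v))"
    by (simp add: cmat_mult_vec_cnj[OF gT_carrier v])
  also have "\<dots> = of_real (- r) \<cdot>\<^sub>v (K *\<^sub>v map_vec cnj v)"
    unfolding i_sympl_mult_vec_cnj[OF v] by (intro eq_vecI) auto
  finally show ?thesis using i_sigma_eigen_iff[OF gT_carrier v'] by simp
qed

lemma symp_eigs_finite: "finite (symp_eigs (NA+NB) gT)"
proof -
  let ?A = "i_sigma_mat (NA+NB) gT"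
  have A: "?A \<in> carrier_mat (2*(NA+NB)) (2*(NA+NB))" by (rule i_sigma_mat_carrier[OF gT_carrier])
  have "char_poly ?A \<noteq> 0" using degree_monic_char_poly[OF A] by auto
  then have "finite {x. poly (char_poly ?A) x = 0}" by (rule poly_roots_finite)
  moreover have "symp_eigs (NA+NB) gT \<subseteq> Re ` {x. poly (char_poly ?A) x = 0}"
    unfolding symp_eigs_def eigenvalue_root_char_poly[OF A] by force
  ultimately show ?thesis by (meson finite_surj)
qed

lemma symp_mult_pos: "r \<in> symp_eigs (NA+NB) gT \<Longrightarrow> 1 \<le> symp_mult (NA+NB) gT r"
proof -
  let ?A = "i_sigma_mat (NA+NB) gT"
  assume r: "r \<in> symp_eigs (NA+NB) gT"
  have A: "?A \<in> carrier_mat (2*(NA+NB)) (2*(NA+NB))" by (rule i_sigma_mat_carrier[OF gT_carrier])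
  have "char_poly ?A \<noteq> 0" using degree_monic_char_poly[OF A] by auto
  moreover have "poly (char_poly ?A) (of_real r) = 0"
    using r unfolding symp_eigs_def eigenvalue_root_char_poly[OF A] by simp
  ultimately show ?thesis unfolding symp_mult_def using order_root by (metis less_one not_le)
qed

definition neg_factor :: real where
  "neg_factor = exp (- log_neg NA NB g)"

lemma neg_factor_pos: "0 < neg_factor"
  unfolding neg_factor_def by simp

lemma neg_factor_le_1: "neg_factor \<le> 1"
  unfolding neg_factor_def log_neg_def
  by (simp add: sum_nonpos mult_nonneg_nonpos)

lemma neg_factor_le_symp_eig:
  assumes t: "t \<in> symp_eigs (NA+NB) gT"
  shows "neg_factor \<le> t"
proof (cases "t < 1")
  case False
  then show ?thesis using neg_factor_le_1 by linarith
next
  case True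
  let ?f = "\<lambda>r. real (symp_mult (NA+NB) gT r) * min (ln r) 0"
  have t0: "0 < t" using t unfolding symp_eigs_def by simp
  have "- log_neg NA NB g = ?f t + (\<Sum>r\<in>symp_eigs (NA+NB) gT - {t}. ?f r)"
    unfolding log_neg_def using symp_eigs_finite t by (simp add: sum.remove)
  also have "(\<Sum>r\<in>symp_eigs (NA+NB) gT - {t}. ?f r) \<le> 0"
    by (intro sum_nonpos) (simp add: mult_nonneg_nonpos)
  also have "?f t \<le> ln t"
    using True t0 symp_mult_pos[OF t] by (simp add: mult_le_cancel_right2)
  finally show ?thesis unfolding neg_factor_def using t0 by (simp add: ln_ge_iff)
qed

lemma gT_plus_K_nonsingular:
  assumes t: "0 \<le> t" "t < neg_factor" and v: "v \<in> carrier_vec (2*(NA+NB))"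
    and kernel: "(cmat gT + of_real t \<cdot>\<^sub>m K) *\<^sub>v v = 0\<^sub>v (2*(NA+NB))"
  shows "v = 0\<^sub>v (2*(NA+NB))"
proof (rule ccontr)
  assume nz: "v \<noteq> 0\<^sub>v (2*(NA+NB))"
  have eig: "cmat gT *\<^sub>v v = of_real (- t) \<cdot>\<^sub>v (K *\<^sub>v v)"
    using kernel_add_smult_eigen[OF cmat_gT_carrier i_sympl_carrier v kernel] by simp
  show False
  proof (cases "t = 0")
    case True
    have "hform (2*(NA+NB)) (cmat gT) v v = 0"
      using hform_eigen[OF cmat_gT_carrier i_sympl_carrier v eig] True by simp
    then show False using partial_transpose_pos_def[OF cov v nz] by simp
  next
    case False
    let ?w = "map_vec cnj v"
    have w: "?w \<in> carrier_vec (2*(NA+NB))" and wnz: "?w \<noteq> 0\<^sub>v (2*(NA+NB))"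
      using v nz by (auto simp: vec_eq_iff)
    have "i_sigma_mat (NA+NB) gT *\<^sub>v v = of_real (- t) \<cdot>\<^sub>v v"
      using eig i_sigma_eigen_iff[OF gT_carrier v] by blast
    then have "i_sigma_mat (NA+NB) gT *\<^sub>v ?w = of_real t \<cdot>\<^sub>v ?w"
      using symp_eigenvector_cnj[OF v] by fastforce
    moreover have "dim_row (i_sigma_mat (NA+NB) gT) = 2*(NA+NB)"
      using gT_carrier by (simp add: i_sigma_mat_def)
    ultimately have "eigenvalue (i_sigma_mat (NA+NB) gT) (of_real t)"
      unfolding eigenvalue_def eigenvector_def using w wnz by metis
    then have "t \<in> symp_eigs (NA+NB) gT"
      unfolding symp_eigs_def using t False by simp
    then show False using neg_factor_le_symp_eig t by fastforce
  qed
qed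

lemma gT_plus_neg_factor_K_psd: "cpx_psd (2*(NA+NB)) (cmat gT + of_real neg_factor \<cdot>\<^sub>m K)"
  using gT_plus_K_nonsingular neg_factor_pos
  by (intro cpx_psd_path_end[OF gT_psd hermitian_i_sympl]) auto

end

section \<open>Witness bound\<close>

lemma mtrace_mult:
  assumes "A \<in> carrier_mat m m" "B \<in> carrier_mat m m"
  shows "mtrace (A * B) = (\<Sum>i<m. \<Sum>k<m. A $$ (i,k) * B $$ (k,i))"
proof -
  have "dim_row (A * B) = m" using assms by simp
  then show ?thesis
    unfolding mtrace_def using times_mat_index_sum[OF assms] by (intro sum.cong) auto
qed

lemma mtrace_comm:
  assumes "A \<in> carrier_mat m m" "B \<in> carrier_mat m m"
  shows "mtrace (A * B) = mtrace (B * A)"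
  unfolding mtrace_mult[OF assms] mtrace_mult[OF assms(2,1)]
  by (subst sum.swap) (simp add: mult.commute)

lemma mtrace_smult:
  assumes "A \<in> carrier_mat m m" "B \<in> carrier_mat m m"
  shows "mtrace ((c \<cdot>\<^sub>m A) * B) = c * mtrace (A * B)"
  using mtrace_mult[OF smult_carrier_mat[OF assms(1)] assms(2)] mtrace_mult[OF assms]
  using assms by (simp add: sum_distrib_left mult.assoc)

locale ppt_bipartite_cov = bipartite_cov +
  assumes ppt_exact: "\<forall>g' \<in> cov_mats (NA + NB).
      g' \<in> sep_cov_mats NA NB \<longleftrightarrow>
      cpx_psd (2*(NA+NB)) (plus_i_sigma (NA+NB) (partial_transpose NA NB g'))"
begin

lemma rescaled_separable: "(1 / neg_factor) \<cdot>\<^sub>m g \<in> sep_cov_mats NA NB"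
proof -
  define c where "c = 1 / neg_factor"
  have c: "1 \<le> c" and cp: "c * neg_factor = 1"
    unfolding c_def using neg_factor_pos neg_factor_le_1 by simp_all
  have G: "cmat gT \<in> carrier_mat (2*(NA+NB)) (2*(NA+NB))" by (rule cmat_gT_carrier)
  have "cpx_psd (2*(NA+NB)) (of_real c \<cdot>\<^sub>m cmat gT + K)"
    unfolding cpx_psd_iff
  proof (intro conjI ballI)
    show "hermitian_mat (2*(NA+NB)) (of_real c \<cdot>\<^sub>m cmat gT + K)"
      by (intro hermitian_add hermitian_smult_real gT_hermitian hermitian_i_sympl)
    fix v :: "complex vec" assume v: "v \<in> carrier_vec (2*(NA+NB))"
    have "0 \<le> Re (hform (2*(NA+NB)) (cmat gT + of_real neg_factor \<cdot>\<^sub>m K) v v)"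
      using gT_plus_neg_factor_K_psd v unfolding cpx_psd_iff by blast
    then have "0 \<le> Re (hform (2*(NA+NB)) (cmat gT) v v) + neg_factor * Re (hform (2*(NA+NB)) K v v)"
      unfolding hform_add[OF G smult_carrier_mat[OF i_sympl_carrier]] hform_smult[OF i_sympl_carrier]
      by simp
    then have "0 \<le> c * (Re (hform (2*(NA+NB)) (cmat gT) v v) + neg_factor * Re (hform (2*(NA+NB)) K v v))"
      using c by simp
    then show "0 \<le> Re (hform (2*(NA+NB)) (of_real c \<cdot>\<^sub>m cmat gT + K) v v)"
      unfolding hform_add[OF smult_carrier_mat[OF G] i_sympl_carrier] hform_smult[OF G]
      using cp by (simp add: distrib_left mult.assoc[symmetric])
  qed
  then have "cpx_psd (2*(NA+NB)) (plus_i_sigma (NA+NB) (partial_transpose NA NB (c \<cdot>\<^sub>m g)))"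
    unfolding plus_i_sigma_eq partial_transpose_smult[OF g_carrier] cmat_smult .
  then show ?thesis
    using ppt_exact cov_mats_smult[OF cov c] unfolding c_def by blast
qed

lemma neg_factor_le_witness:
  assumes Z: "Z \<in> witnesses NA NB"
  shows "neg_factor \<le> mtrace (Z * g)"
proof -
  have ZC: "Z \<in> carrier_mat (2*(NA+NB)) (2*(NA+NB))"
    using Z unfolding witnesses_def real_sym_def by blast
  have "1 \<le> mtrace (((1 / neg_factor) \<cdot>\<^sub>m g) * Z)"
    using Z rescaled_separable unfolding witnesses_def by blast
  also have "\<dots> = mtrace (Z * g) / neg_factor"
    unfolding mtrace_smult[OF g_carrier ZC] mtrace_comm[OF g_carrier ZC] by simp
  finally show ?thesis using neg_factor_pos by (simp add: field_simps)
qed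

lemma log_neg_ge_witness:
  assumes Z: "Z \<in> witnesses NA NB" and pos: "0 < mtrace (Z * g)"
  shows "ln (1 / mtrace (Z * g)) \<le> log_neg NA NB g"
proof -
  have "- log_neg NA NB g \<le> ln (mtrace (Z * g))"
    using neg_factor_le_witness[OF Z] pos unfolding neg_factor_def by (simp add: ln_ge_iff)
  then show ?thesis using pos by (simp add: ln_div)
qed

end

section \<open>Witnesses attached to symplectic eigenvalues\<close>

definition pt_real_dyad :: "nat \<Rightarrow> nat \<Rightarrow> complex vec \<Rightarrow> real mat" where
  "pt_real_dyad NA m w = mat m m (\<lambda>(i,j). pt_sign NA i * pt_sign NA j * Re (cnj (w$i) * w$j))"

lemma real_sym_pt_real_dyad: "real_sym m (pt_real_dyad NA m w)"
  unfolding real_sym_def pt_real_dyad_def by (auto intro!: eq_matI simp: algebra_simps)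

lemma mtrace_mult_pt_real_dyad:
  assumes Y: "Y \<in> carrier_mat (2*(NA+NB)) (2*(NA+NB))"
  shows "mtrace (Y * pt_real_dyad NA (2*(NA+NB)) w) =
    Re (hform (2*(NA+NB)) (cmat (partial_transpose NA NB Y)) w w)"
proof -
  let ?m = "2*(NA+NB)"
  have D: "pt_real_dyad NA ?m w \<in> carrier_mat ?m ?m" unfolding pt_real_dyad_def by simp
  have "mtrace (Y * pt_real_dyad NA ?m w) =
      (\<Sum>i<?m. \<Sum>k<?m. partial_transpose NA NB Y $$ (i,k) * Re (cnj (w$i) * w$k))"
    unfolding mtrace_mult[OF Y D] using Y
    by (intro sum.cong refl) (simp add: pt_real_dyad_def partial_transpose_index algebra_simps)
  also have "\<dots> = Re (hform ?m (cmat (partial_transpose NA NB Y)) w w)"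
    unfolding hform_def Re_sum using Y by (intro sum.cong refl) (simp add: algebra_simps)
  finally show ?thesis .
qed

context ppt_bipartite_cov
begin

lemma pt_real_dyad_witness:
  assumes w: "w \<in> carrier_vec (2*(NA+NB))"
    and \<kappa>: "\<kappa> = - Re (hform (2*(NA+NB)) K w w)" "0 < \<kappa>"
  shows "(1 / \<kappa>) \<cdot>\<^sub>m pt_real_dyad NA (2*(NA+NB)) w \<in> witnesses NA NB"
  unfolding witnesses_def mem_Collect_eq
proof (intro conjI ballI)
  let ?m = "2*(NA+NB)" and ?D = "pt_real_dyad NA (2*(NA+NB)) w"
  show "real_sym ?m ((1 / \<kappa>) \<cdot>\<^sub>m ?D)" by (intro real_sym_smult real_sym_pt_real_dyad)
  fix g' assume sep: "g' \<in> sep_cov_mats NA NB"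
  then have cov': "g' \<in> cov_mats (NA+NB)" unfolding sep_cov_mats_def by blast
  have g'C: "g' \<in> carrier_mat ?m ?m" by (rule cov_mats_carrier[OF cov'])
  have PC: "cmat (partial_transpose NA NB g') \<in> carrier_mat ?m ?m"
    by (rule cmat_carrier[OF partial_transpose_carrier[OF g'C]])
  have "cpx_psd ?m (cmat (partial_transpose NA NB g') + K)"
    using ppt_exact cov' sep unfolding plus_i_sigma_eq by blast
  then have "0 \<le> Re (hform ?m (cmat (partial_transpose NA NB g') + K) w w)"
    using w unfolding cpx_psd_iff by blast
  then have "\<kappa> \<le> mtrace (g' * ?D)"
    unfolding \<kappa>(1) mtrace_mult_pt_real_dyad[OF g'C] hform_add[OF PC i_sympl_carrier] by simp
  then show "1 \<le> mtrace (g' * ((1 / \<kappa>) \<cdot>\<^sub>m ?D))"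
    using \<kappa>(2) mtrace_smult[of ?D ?m g' "1 / \<kappa>"] g'C
    by (simp add: pt_real_dyad_def mtrace_comm[OF g'C])
qed

text \<open>For an eigenvector \<open>v\<close> of \<open>i \<sigma> g\<^sup>T\<^sup>A\<close> with eigenvalue \<open>r\<close>, the conjugate \<open>w = v\<^sup>*\<close>
  satisfies \<open>g\<^sup>T\<^sup>A w = - r i \<sigma> w\<close>, so the witness built from \<open>w\<close> takes the value \<open>r\<close> on \<open>g\<close>.\<close>
lemma symp_eig_witness:
  assumes r: "r \<in> symp_eigs (NA+NB) gT"
  obtains Z where "Z \<in> witnesses NA NB" "mtrace (Z * g) = r"
proof -
  let ?m = "2*(NA+NB)"
  have r0: "0 < r" using r unfolding symp_eigs_def by auto
  have dim: "dim_row (i_sigma_mat (NA+NB) gT) = ?m" using gT_carrier by (simp add: i_sigma_mat_def)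
  from r obtain v where v: "v \<in> carrier_vec ?m" "v \<noteq> 0\<^sub>v ?m"
    and eig: "i_sigma_mat (NA+NB) gT *\<^sub>v v = of_real r \<cdot>\<^sub>v v"
    unfolding symp_eigs_def eigenvalue_def eigenvector_def dim by auto
  define w where "w = map_vec cnj v"
  have w: "w \<in> carrier_vec ?m" "w \<noteq> 0\<^sub>v ?m"
    using v unfolding w_def by (auto simp: vec_eq_iff)
  have "cmat gT *\<^sub>v w = of_real (- r) \<cdot>\<^sub>v (K *\<^sub>v w)"
    using symp_eigenvector_cnj[OF v(1) eig] i_sigma_eigen_iff[OF gT_carrier w(1)] unfolding w_def
    by blast
  then have gT_w: "hform ?m (cmat gT) w w = of_real (- r) * hform ?m K w w"
    by (rule hform_eigen[OF cmat_gT_carrier i_sympl_carrier w(1)])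
  define \<kappa> where "\<kappa> = - Re (hform ?m K w w)"
  have re_gT_w: "Re (hform ?m (cmat gT) w w) = r * \<kappa>" unfolding \<kappa>_def gT_w by simp
  have \<kappa>: "0 < \<kappa>"
    using partial_transpose_pos_def[OF cov w] re_gT_w r0 by (simp add: zero_less_mult_iff)
  let ?Z = "(1 / \<kappa>) \<cdot>\<^sub>m pt_real_dyad NA ?m w"
  have "mtrace (?Z * g) = mtrace (pt_real_dyad NA ?m w * g) / \<kappa>"
    using mtrace_smult[OF _ g_carrier, of "pt_real_dyad NA ?m w" "1 / \<kappa>"] by (simp add: pt_real_dyad_def)
  also have "\<dots> = r"
    using mtrace_comm[OF _ g_carrier, of "pt_real_dyad NA ?m w"] mtrace_mult_pt_real_dyad[OF g_carrier] re_gT_w \<kappa>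
    by (simp add: pt_real_dyad_def)
  finally show ?thesis using that pt_real_dyad_witness[OF w(1) \<kappa>_def \<kappa>] by blast
qed

end

section \<open>The two-mode case\<close>

lemma poly_linear_factors: "poly (\<Prod>a\<leftarrow>as. [:- a, 1:]) x = (\<Prod>a\<leftarrow>as. x - (a :: 'a :: comm_ring_1))"
  by (induct as) (simp_all add: algebra_simps)

lemma order_linear_factors: "order x (\<Prod>a\<leftarrow>as. [:- a, 1:]) = count (mset as) (x :: 'a :: idom)"
proof (induct as)
  case Nil
  then show ?case by (simp add: order_0I)
next
  case (Cons a as)
  have split: "(\<Prod>x\<leftarrow>a # as. [:- x, 1:]) = [:- a, 1:] * (\<Prod>x\<leftarrow>as. [:- x, 1:])" by simp
  have "(\<Prod>x\<leftarrow>a # as. [:- x, 1:]) \<noteq> (0 :: 'a poly)"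
    unfolding prod_list_zero_iff by auto
  then have "order x (\<Prod>x\<leftarrow>a # as. [:- x, 1:]) = order x [:- a, 1:] + order x (\<Prod>x\<leftarrow>as. [:- x, 1:])"
    unfolding split by (rule order_mult)
  moreover have "order x [:- a, 1:] = (if x = a then 1 else 0)"
    using order_power_n_n[of a 1] by (auto intro: order_0I)
  ultimately show ?case using Cons by simp
qed

lemma root_linear_factors: "poly (\<Prod>a\<leftarrow>as. [:- a, 1:]) x = 0 \<longleftrightarrow> (x :: 'a :: idom) \<in> set as"
  unfolding poly_linear_factors by (induct as) auto

lemma cmod_det_linear_factors:
  assumes B: "B \<in> carrier_mat k k" and cp: "char_poly B = (\<Prod>a\<leftarrow>as. [:- a, 1:])"
  shows "cmod (det B) = prod_mset (image_mset cmod (mset as))"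
proof -
  have "poly (char_poly B) 0 = det (- char_matrix B 0)" by (rule char_poly_matrix[OF B])
  also have "- char_matrix B 0 = (-1) \<cdot>\<^sub>m B"
    unfolding char_matrix_def by (rule eq_matI) (use B in auto)
  finally have "cmod (det B) = cmod (poly (char_poly B) 0)"
    using B by (simp add: norm_mult norm_power)
  also have "\<dots> = prod_mset (image_mset cmod (mset as))"
    unfolding cp poly_linear_factors by (induct as) (auto simp: norm_mult)
  finally show ?thesis .
qed

lemma det_uminus_even:
  "C \<in> carrier_mat (2*n) (2*n) \<Longrightarrow> det (- C) = det (C :: 'a :: comm_ring_1 mat)"
proof -
  assume C: "C \<in> carrier_mat (2*n) (2*n)"
  have "- C = (-1) \<cdot>\<^sub>m C" by (rule eq_matI) auto
  then show ?thesis using C by simp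
qed

lemma poly_char_poly_uminus:
  assumes M: "M \<in> carrier_mat (2*n) (2*n)"
  shows "poly (char_poly (- M)) y = poly (char_poly M) (- (y :: 'a :: field))"
proof -
  have "- char_matrix (- M) y = M + y \<cdot>\<^sub>m 1\<^sub>m (2*n)"
    unfolding char_matrix_def using M by (intro eq_matI) auto
  moreover have "- char_matrix M (- y) = - (M + y \<cdot>\<^sub>m 1\<^sub>m (2*n))"
    unfolding char_matrix_def using M by (intro eq_matI) auto
  moreover have "M + y \<cdot>\<^sub>m 1\<^sub>m (2*n) \<in> carrier_mat (2*n) (2*n)" using M by simp
  ultimately show ?thesis
    using char_poly_matrix[OF M] char_poly_matrix[OF uminus_carrier_mat[OF M]] det_uminus_even by metis
qed

lemma subseteq_mset_size_eq: "N \<subseteq># M \<Longrightarrow> size N = size M \<Longrightarrow> N = M"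
  using mset_subset_size subset_mset.le_neq_trans by fastforce

text \<open>The multiset of eigenvalues of \<open>i \<sigma> g\<^sup>T\<^sup>A\<close> is symmetric under \<open>\<mu> \<mapsto> -\<mu>\<close>, and its
  product has modulus \<open>|det g| \<ge> 1\<close>. With only four eigenvalues this leaves room for at most
  one symplectic eigenvalue below \<open>1\<close>, which is then simple.\<close>
lemma two_mode_spectrum:
  fixes M :: "complex multiset" and r :: real
  assumes size: "size M = 4" and sym: "\<And>z. count M (- z) = count M z"
    and prod: "1 \<le> prod_mset (image_mset cmod M)"
    and r: "0 < r" "r < 1" "of_real r \<in># M"
  shows "count M (of_real r) = 1" "\<And>s. 0 < s \<Longrightarrow> s < 1 \<Longrightarrow> of_real s \<in># M \<Longrightarrow> s = r"
proof -
  let ?c = "complex_of_real r"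
  have neg: "- ?c \<in># M" using r(3) sym[of ?c] by (metis count_greater_zero_iff)
  have cne: "?c \<noteq> - ?c" using r(1) by (simp add: complex_eq_iff)
  show "count M ?c = 1"
  proof (rule ccontr)
    assume "count M ?c \<noteq> 1"
    moreover have "0 < count M ?c" using r(3) by simp
    ultimately have two: "2 \<le> count M ?c" by linarith
    then have "{#?c, ?c, -?c, -?c#} \<subseteq># M"
      using sym[of ?c] cne by (auto simp: subseteq_mset_def)
    then have "M = {#?c, ?c, -?c, -?c#}" using size by (intro subseteq_mset_size_eq[symmetric]) simp_all
    then have "prod_mset (image_mset cmod M) = r^4" using r(1) by (simp add: power4_eq_xxxx)
    moreover have "r^4 < 1" using r by (simp add: power_less_one_iff)
    ultimately show False using prod by simp
  qed
  fix s assume s: "0 < s" "s < 1" "of_real s \<in># M"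
  show "s = r"
  proof (rule ccontr)
    let ?d = "complex_of_real s"
    assume "s \<noteq> r"
    then have ne: "?c \<noteq> ?d" "?c \<noteq> - ?d" "- ?c \<noteq> ?d" "- ?c \<noteq> - ?d" "?d \<noteq> - ?d"
      using r(1) s(1) by (auto simp: complex_eq_iff)
    have "- ?d \<in># M" using s(3) sym[of ?d] by (metis count_greater_zero_iff)
    then have "{#?c, -?c, ?d, -?d#} \<subseteq># M"
      using r neg s ne by (auto simp: subseteq_mset_def)
    then have "M = {#?c, -?c, ?d, -?d#}" using size by (intro subseteq_mset_size_eq[symmetric]) simp_all
    then have "prod_mset (image_mset cmod M) = (r * s)\<^sup>2" using r(1) s(1) by (simp add: power2_eq_square)
    moreover have "r * s < 1 * 1" using r s by (intro mult_strict_mono) auto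
    then have "(r * s)\<^sup>2 < 1" using r s by (simp add: power_less_one_iff)
    ultimately show False using prod by simp
  qed
qed

lemma prod_mset_ge_1: "(\<And>a. a \<in># M \<Longrightarrow> 1 \<le> (a :: real)) \<Longrightarrow> 1 \<le> prod_mset M"
proof (induct M)
  case (add a M)
  then show ?case by (simp add: one_le_mult_iff order_trans[OF _ mult_mono])
    (metis mult_mono' mult_1 order_trans zero_le_one)
qed simp

context bipartite_cov
begin

lemma transpose_cmat_gT: "transpose_mat (cmat gT) = cmat gT"
proof -
  have "real_sym (2*(NA+NB)) gT"
    using cov unfolding cov_mats_def by (intro real_sym_partial_transpose) blast
  then have "transpose_mat gT = gT" unfolding real_sym_def by blast
  then show ?thesis unfolding cmat_def map_mat_transpose by simp
qed

lemma symp_char_poly_even: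
  "poly (char_poly (i_sigma_mat (NA+NB) gT)) (- y) = poly (char_poly (i_sigma_mat (NA+NB) gT)) y"
proof -
  let ?X = "cmat gT" and ?m = "2*(NA+NB)"
  let ?A = "K * ?X"
  have KC: "K \<in> carrier_mat ?m ?m" and XC: "?X \<in> carrier_mat ?m ?m"
    using cmat_gT_carrier by auto
  have AC: "?A \<in> carrier_mat ?m ?m" by (rule mult_carrier_mat[OF KC XC])
  have KA: "K * ?A = ?X"
    unfolding assoc_mult_mat[OF KC KC XC, symmetric] i_sympl_mult_i_sympl by (rule left_mult_one_mat[OF XC])
  have "- transpose_mat ?A = K * ?A * K"
    using transpose_mult[OF KC XC] g_carrier by (simp add: transpose_cmat_gT transpose_i_sympl KA)
  then have "similar_mat (- transpose_mat ?A) ?A"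
    using KC AC by (intro similar_matI[of _ _ K K ?m]) (auto simp: i_sympl_mult_i_sympl)
  then have "char_poly ?A = char_poly (- ?A)"
    using char_poly_transpose_mat[OF uminus_carrier_mat[OF AC]] by (simp add: char_poly_similar transpose_uminus)
  then show ?thesis
    unfolding i_sigma_mat_eq[OF gT_carrier] using poly_char_poly_uminus[OF AC] by simp
qed

lemma symp_roots_count_uminus:
  assumes cp: "char_poly (i_sigma_mat (NA+NB) gT) = (\<Prod>a\<leftarrow>as. [:- a, 1:])"
    and len: "length as = 2*(NA+NB)"
  shows "count (mset as) (- z) = count (mset as) z"
proof -
  have "poly (\<Prod>a\<leftarrow>map uminus as. [:- a, 1:]) y = poly (\<Prod>a\<leftarrow>as. [:- a, 1:]) y" for y
  proof -
    have "poly (\<Prod>a\<leftarrow>map uminus as. [:- a, 1:]) y = (-1) ^ length as * (\<Prod>a\<leftarrow>as. - y - a)"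
      unfolding poly_linear_factors by (induct as) (auto simp: algebra_simps)
    also have "\<dots> = poly (\<Prod>a\<leftarrow>as. [:- a, 1:]) y"
      using symp_char_poly_even[of y] len unfolding cp poly_linear_factors by simp
    finally show ?thesis .
  qed
  then have "(\<Prod>a\<leftarrow>map uminus as. [:- a, 1:]) = (\<Prod>a\<leftarrow>as. [:- a, 1:])"
    using poly_eq_poly_eq_iff by blast
  then have "count (mset (map uminus as)) z = count (mset as) z"
    by (metis order_linear_factors)
  moreover have "count (mset (map uminus as)) z = count (mset as) (- z)"
    by (induct as) auto
  ultimately show ?thesis by simp
qed

lemma symp_roots_prod_ge_1:
  assumes cp: "char_poly (i_sigma_mat (NA+NB) gT) = (\<Prod>a\<leftarrow>as. [:- a, 1:])"
  shows "1 \<le> prod_mset (image_mset cmod (mset as))"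
proof -
  let ?m = "2*(NA+NB)" and ?G = "i_sigma_mat (NA+NB) g"
  have GC: "?G \<in> carrier_mat ?m ?m" by (rule i_sigma_mat_carrier[OF g_carrier])
  have AC: "i_sigma_mat (NA+NB) gT \<in> carrier_mat ?m ?m" by (rule i_sigma_mat_carrier[OF gT_carrier])
  obtain bs where bs: "char_poly ?G = (\<Prod>b\<leftarrow>bs. [:- b, 1:])"
    using char_poly_factorized[OF GC] by blast
  have "1 \<le> prod_mset (image_mset cmod (mset bs))"
  proof (rule prod_mset_ge_1)
    fix x assume "x \<in># image_mset cmod (mset bs)"
    then obtain b where "b \<in> set bs" "x = cmod b" by auto
    then have "eigenvalue ?G b" "x = cmod b"
      using eigenvalue_root_char_poly[OF GC] unfolding bs root_linear_factors by auto
    then show "1 \<le> x" using cov_mats_symp_eigenvalue_ge_1[OF cov] by simp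
  qed
  also have "\<dots> = cmod (det ?G)" by (rule cmod_det_linear_factors[OF GC bs, symmetric])
  also have "det ?G = det (i_sigma_mat (NA+NB) gT)"
    unfolding i_sigma_mat_eq[OF g_carrier] i_sigma_mat_eq[OF gT_carrier]
    using det_mult[OF i_sympl_carrier cmat_carrier[OF g_carrier]] det_mult[OF i_sympl_carrier cmat_gT_carrier]
      det_cmat_partial_transpose[OF g_carrier] by simp
  also have "cmod \<dots> = prod_mset (image_mset cmod (mset as))"
    by (rule cmod_det_linear_factors[OF AC cp])
  finally show ?thesis .
qed

lemma symp_eig_lt_1_if_neg_factor_lt_1:
  assumes "neg_factor < 1"
  obtains r where "r \<in> symp_eigs (NA+NB) gT" "r < 1"
proof -
  have "log_neg NA NB g \<noteq> 0" using assms unfolding neg_factor_def by auto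
  then obtain r where "r \<in> symp_eigs (NA+NB) gT" "min (ln r) 0 \<noteq> 0"
    unfolding log_neg_def by (metis (no_types, lifting) mult_zero_right neg_0_equal_iff_equal sum.neutral)
  then show ?thesis using that by (metis ln_ge_zero min.absorb2 not_le)
qed

lemma neg_factor_eq_simple_symp_eig:
  assumes r0: "r0 \<in> symp_eigs (NA+NB) gT" "symp_mult (NA+NB) gT r0 = 1" "r0 < 1"
    and others: "\<And>r. r \<in> symp_eigs (NA+NB) gT \<Longrightarrow> r \<noteq> r0 \<Longrightarrow> 1 \<le> r"
  shows "neg_factor = r0"
proof -
  define f where "f r = real (symp_mult (NA+NB) gT r) * min (ln r) 0" for r
  have "(\<Sum>r\<in>symp_eigs (NA+NB) gT - {r0}. f r) = 0"
    using others unfolding f_def by (intro sum.neutral) auto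
  then have "- log_neg NA NB g = f r0"
    unfolding log_neg_def f_def[symmetric] using symp_eigs_finite r0(1) by (simp add: sum.remove)
  also have "\<dots> = ln r0" unfolding f_def r0(2) using r0(1,3) by (simp add: symp_eigs_def)
  finally show ?thesis using r0(1) unfolding neg_factor_def symp_eigs_def by simp
qed

lemma two_mode_neg_factor_symp_eig:
  assumes two: "NA + NB = 2" and lt: "neg_factor < 1"
  shows "neg_factor \<in> symp_eigs (NA+NB) gT"
proof -
  let ?A = "i_sigma_mat (NA+NB) gT"
  have AC: "?A \<in> carrier_mat (2*(NA+NB)) (2*(NA+NB))" by (rule i_sigma_mat_carrier[OF gT_carrier])
  obtain as where cp: "char_poly ?A = (\<Prod>a\<leftarrow>as. [:- a, 1:])" and len: "length as = 2*(NA+NB)"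
    using char_poly_factorized[OF AC] by blast
  have eigs: "r \<in> symp_eigs (NA+NB) gT \<longleftrightarrow> 0 < r \<and> of_real r \<in># mset as" for r
    unfolding symp_eigs_def eigenvalue_root_char_poly[OF AC] cp root_linear_factors by simp
  obtain r0 where r0: "r0 \<in> symp_eigs (NA+NB) gT" "r0 < 1"
    using symp_eig_lt_1_if_neg_factor_lt_1[OF lt] by blast
  have size: "size (mset as) = 4" using len two by simp
  note spectrum = two_mode_spectrum[OF size symp_roots_count_uminus[OF cp len] symp_roots_prod_ge_1[OF cp]]
  have "symp_mult (NA+NB) gT r0 = 1"
    unfolding symp_mult_def cp order_linear_factors using spectrum(1) r0 eigs by auto
  moreover have "1 \<le> r" if "r \<in> symp_eigs (NA+NB) gT" "r \<noteq> r0" for r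
    using spectrum(2)[of r0 r] r0 eigs that by force
  ultimately show ?thesis using neg_factor_eq_simple_symp_eig r0 by auto
qed

end

theorem mainTheorem11:
  fixes NA NB :: nat and g :: "real mat"
  assumes PPT: "\<forall>g' \<in> cov_mats (NA + NB).
      g' \<in> sep_cov_mats NA NB \<longleftrightarrow>
      cpx_psd (2*(NA+NB)) (plus_i_sigma (NA+NB) (partial_transpose NA NB g'))"
    and cm: "g \<in> cov_mats (NA + NB)"
  shows "(\<forall>Z \<in> witnesses NA NB. 0 < mtrace (Z * g) \<and> mtrace (Z * g) < 1 \<longrightarrow>
            ln (1 / mtrace (Z * g)) \<le> log_neg NA NB g)
       \<and> (NA = 1 \<and> NB = 1 \<longrightarrow>
           (\<forall>Zmin \<in> witnesses NA NB.
              (\<forall>Z \<in> witnesses NA NB. mtrace (Zmin * g) \<le> mtrace (Z * g)) \<and>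
              0 < mtrace (Zmin * g) \<and> mtrace (Zmin * g) < 1 \<longrightarrow>
              log_neg NA NB g = ln (1 / mtrace (Zmin * g))))"
proof -
  interpret ppt_bipartite_cov NA NB g
    using PPT cm by unfold_locales
  have two_mode: "log_neg NA NB g = ln (1 / mtrace (Zmin * g))"
    if two: "NA = 1" "NB = 1" and Zmin: "Zmin \<in> witnesses NA NB"
      and min: "\<forall>Z \<in> witnesses NA NB. mtrace (Zmin * g) \<le> mtrace (Z * g)"
      and lt: "mtrace (Zmin * g) < 1"
    for Zmin
  proof -
    have "neg_factor < 1" using neg_factor_le_witness[OF Zmin] lt by linarith
    then obtain Z where "Z \<in> witnesses NA NB" "mtrace (Z * g) = neg_factor"
      using two_mode_neg_factor_symp_eig symp_eig_witness two by auto
    then have "mtrace (Zmin * g) = neg_factor"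
      using min neg_factor_le_witness[OF Zmin] by force
    then show ?thesis unfolding neg_factor_def by (simp add: ln_div)
  qed
  show ?thesis using log_neg_ge_witness two_mode by auto
qed

end
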